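(* A function $\mathbf F:\mathbb N^{d}\to\mathbb R^{d'}$ is computable in polynomial time if and only if there exist $\mathbf f:\mathbb N^{d+1}\to\mathbb Q^{d'}$, with $\mathbf f(\mathbf m,n)$ computable in polynomial time in unary in $n$, and $g:\mathbb N^{d+1}\to\mathbb Q$ such that: $\|\mathbf f(\mathbf m,n)-\mathbf F(\mathbf m)\|\le g(\mathbf m,n)$ for all $\mathbf m,n$; $0\le g(\mathbf m,n)$ and $g(\mathbf m,n)\to0$ as $n\to+\infty$; and $g$ has a uniform polynomial modulus of convergence $p$.
   Context: $\|\cdot\|$ is the sup-norm. Polynomial-time computability is in the sense of computable analysis: $\mathbf F$ is polynomial-time computable if a Turing machine, given $\mathbf m$ (binary) and $n$, outputs dyadics $q$ with $\|q-\mathbf F(\mathbf m)\|\le 2^{-n}$ in time polynomial in $\ell(m_1),\dots,\ell(m_d),n$ ($\ell$ = binary length). $\mathbf f(\mathbf m,n)$ being polynomial-time computable in unary in $n$ means the same with the time bound polynomial in $\ell(m_1),\dots,\ell(m_d)$, $n$ itself, and the output precision. A function $M:\mathbb N\to\mathbb N$ is a uniform modulus of convergence of $g:\mathbb N^{d+1}\to\mathbb R$ (with $g(\mathbf m,n)\to0$ as $n\to\infty$) if for all $\mathbf m$, $n$ and all $i>M(n)$, $\|g(\mathbf m,i)\|\le 2^{-n}$. *)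

theory Defs
  imports Complex_Main "HOL-Computational_Algebra.Polynomial"
begin

text \<open>Tape symbols are naturals below
  nsyms (0 = blank, 1 = bit 0, 2 = bit 1, 3 = separator, 4 = minus sign);
  states are naturals below nstates, 0 = start state, 1 = halting state.
  The tape is a pair (ls, rs): ls is the part left of the head (reversed),
  the head reads hd rs (blank if rs = []).\<close>

datatype move = MoveL | MoveR | Stay

record tm =
  nstates :: nat
  nsyms :: nat
  delta :: "nat \<Rightarrow> nat \<Rightarrow> nat \<times> nat \<times> move"

type_synonym config = "nat \<times> nat list \<times> nat list"

definition tm_wf :: "tm \<Rightarrow> bool" where
  "tm_wf M \<longleftrightarrow> nstates M \<ge> 2 \<and> nsyms M \<ge> 5 \<and>
     (\<forall>q < nstates M. \<forall>s < nsyms M.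
        fst (delta M q s) < nstates M \<and> fst (snd (delta M q s)) < nsyms M)"

definition tm_step :: "tm \<Rightarrow> config \<Rightarrow> config" where
  "tm_step M c = (case c of (q, ls, rs) \<Rightarrow>
     if q = 1 then c else
     (let r = (case rs of [] \<Rightarrow> 0 | s # _ \<Rightarrow> s);
          (q', w, mv) = delta M q r
      in case mv of
           Stay \<Rightarrow> (q', ls, w # tl rs)
         | MoveR \<Rightarrow> (q', w # ls, tl rs)
         | MoveL \<Rightarrow> (case ls of [] \<Rightarrow> (q', [], 0 # w # tl rs)
                               | l # ls' \<Rightarrow> (q', ls', l # w # tl rs))))"

definition tm_run :: "tm \<Rightarrow> nat \<Rightarrow> nat list \<Rightarrow> config" where
  "tm_run M t x = (tm_step M ^^ t) (0, [], x)"

definition tm_outputs_within :: "tm \<Rightarrow> nat list \<Rightarrow> nat \<Rightarrow> nat list \<Rightarrow> bool" where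
  "tm_outputs_within M x t y \<longleftrightarrow>
     (\<exists>s \<le> t. fst (tm_run M s x) = 1 \<and>
              takeWhile (\<lambda>a. a \<noteq> 0) (snd (snd (tm_run M s x))) = y)"

fun bin :: "nat \<Rightarrow> nat list" where
  "bin n = (if n < 2 then [n + 1] else bin (n div 2) @ [n mod 2 + 1])"

definition blen :: "nat \<Rightarrow> nat" where
  "blen m = length (bin m)"

definition unary :: "nat \<Rightarrow> nat list" where
  "unary n = replicate n 2"

definition enc_nats :: "nat list \<Rightarrow> nat list" where
  "enc_nats ms = concat (map (\<lambda>m. bin m @ [3]) ms)"

definition dyval :: "int \<times> nat \<Rightarrow> real" where
  "dyval q = real_of_int (fst q) / 2 ^ snd q"

definition enc_dyadic :: "int \<times> nat \<Rightarrow> nat list" where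
  "enc_dyadic q = (if fst q < 0 then [4] else []) @ bin (nat \<bar>fst q\<bar>) @ [3] @ bin (snd q) @ [3]"

definition enc_dyadics :: "(int \<times> nat) list \<Rightarrow> nat list" where
  "enc_dyadics qs = concat (map enc_dyadic qs)"

definition supdist :: "nat \<Rightarrow> real list \<Rightarrow> real list \<Rightarrow> real" where
  "supdist k xs ys = Max (insert 0 ((\<lambda>i. \<bar>xs ! i - ys ! i\<bar>) ` {..<k}))"

definition approx_output :: "nat \<Rightarrow> nat list \<Rightarrow> real list \<Rightarrow> nat \<Rightarrow> bool" where
  "approx_output d' y v n \<longleftrightarrow>
     (\<exists>qs. length qs = d' \<and> y = enc_dyadics qs \<and> supdist d' (map dyval qs) v \<le> (1/2) ^ n)"

definition ptime_real :: "nat \<Rightarrow> nat \<Rightarrow> (nat list \<Rightarrow> real list) \<Rightarrow> bool" where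
  "ptime_real d d' F \<longleftrightarrow>
     (\<exists>M (P :: nat poly). tm_wf M \<and>
        (\<forall>m n. length m = d \<longrightarrow>
           (\<exists>y. tm_outputs_within M (enc_nats m @ unary n)
                   (poly P (sum_list (map blen m) + n)) y
                \<and> approx_output d' y (F m) n)))"

definition ptime_unary :: "nat \<Rightarrow> nat \<Rightarrow> (nat list \<Rightarrow> nat \<Rightarrow> rat list) \<Rightarrow> bool" where
  "ptime_unary d d' f \<longleftrightarrow>
     (\<exists>M (P :: nat poly). tm_wf M \<and>
        (\<forall>m n k. length m = d \<longrightarrow>
           (\<exists>y. tm_outputs_within M (enc_nats m @ unary n @ [3] @ unary k)
                   (poly P (sum_list (map blen m) + n + k)) y
                \<and> approx_output d' y (map of_rat (f m n)) k)))"

end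

theory Submission
  imports Defs
begin

text \<open>
  For the forward direction, the approximations output by a machine for F themselves form a
  suitable f, with g m n = 2^-n and the identity as modulus. Conversely, to approximate F m
  within 2^-n it suffices to evaluate f m N to a precision K \<ge> n + 1 at some N > p (n + 1),
  since both errors are then at most 2^-(n+1). The only difficulty is to write such N and K in
  unary in polynomial time, as p may have any degree. This is done by a fixed number r of
  multiplication rounds on unary blocks: starting from blocks of lengths a = n and b = 2, each
  round appends a block of length 2 + a b, so that (a, b) becomes (b, 2 + a b). After r rounds
  the last-but-one block has length at least (2 (n + 1))^(r - 2), which exceeds p (n + 1) when
  r - 3 is the degree plus the coefficient sum of p. All blocks but the last, merged, give N,
  and the last one, of length at least n + 1, gives K. For fixed r the whole tape has length
  polynomial in n, of degree 3^(r + 1).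
\<close>

section \<open>Tapes up to trailing blanks\<close>

text \<open>A tape list and the same list followed by blanks describe the same tape; tm_step
  produces both forms, so configurations are compared up to trailing blanks.\<close>

definition blank_eq :: "nat list \<Rightarrow> nat list \<Rightarrow> bool" where
  "blank_eq xs ys \<longleftrightarrow> (\<exists>a b. xs @ replicate a 0 = ys @ replicate b 0)"

definition config_eq :: "config \<Rightarrow> config \<Rightarrow> bool" where
  "config_eq c d \<longleftrightarrow>
     fst c = fst d \<and> blank_eq (fst (snd c)) (fst (snd d)) \<and> blank_eq (snd (snd c)) (snd (snd d))"

abbreviation twos :: "nat \<Rightarrow> nat list" where
  "twos k \<equiv> replicate k 2"

lemma blank_eq_refl [simp]: "blank_eq xs xs"
  unfolding blank_eq_def by blast

lemma blank_eq_sym: "blank_eq xs ys \<Longrightarrow> blank_eq ys xs"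
  unfolding blank_eq_def by metis

lemma blank_eq_trans: "blank_eq xs ys \<Longrightarrow> blank_eq ys zs \<Longrightarrow> blank_eq xs zs"
proof -
  assume "blank_eq xs ys" "blank_eq ys zs"
  then obtain a b c e where xy: "xs @ replicate a 0 = ys @ replicate b 0"
    and yz: "ys @ replicate c 0 = zs @ replicate e 0" unfolding blank_eq_def by blast
  have "xs @ replicate (a + c) 0 = ys @ replicate (b + c) 0"
    using xy by (metis append.assoc replicate_add)
  also have "\<dots> = zs @ replicate (e + b) 0"
    using yz by (metis append.assoc replicate_add add.commute)
  finally show ?thesis unfolding blank_eq_def by blast
qed

lemma blank_eq_append_blanks [simp]:
  "blank_eq (xs @ replicate n 0) xs" "blank_eq xs (xs @ replicate n 0)"
  unfolding blank_eq_def by (metis append.assoc replicate_add append_Nil2 replicate_0)+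

lemma blank_eq_append_left [simp]: "blank_eq (xs @ ys) (xs @ zs) \<longleftrightarrow> blank_eq ys zs"
  unfolding blank_eq_def by auto

lemma blank_eq_Cons_Cons [simp]: "blank_eq (x # ys) (x # zs) \<longleftrightarrow> blank_eq ys zs"
  using blank_eq_append_left[of "[x]"] by simp

lemma blank_eq_self_append [simp]: "blank_eq xs (xs @ ys) \<longleftrightarrow> set ys \<subseteq> {0}"
proof
  assume "blank_eq xs (xs @ ys)"
  then obtain a b where "replicate a 0 = ys @ replicate b 0" unfolding blank_eq_def by auto
  then show "set ys \<subseteq> {0}"
    by (metis Un_subset_iff set_append set_replicate_Suc set_replicate_conv_if subset_refl empty_subsetI)
next
  assume "set ys \<subseteq> {0}"
  then have "ys = replicate (length ys) 0" by (induction ys) auto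
  then show "blank_eq xs (xs @ ys)" by (metis blank_eq_append_blanks(2))
qed

lemma blank_eq_append_self [simp]: "blank_eq (xs @ ys) xs \<longleftrightarrow> set ys \<subseteq> {0}"
  using blank_eq_self_append blank_eq_sym by blast

lemma blank_eq_Nil [simp]:
  "blank_eq [] ys \<longleftrightarrow> set ys \<subseteq> {0}" "blank_eq ys [] \<longleftrightarrow> set ys \<subseteq> {0}"
  using blank_eq_self_append[of "[]" ys] blank_eq_append_self[of "[]" ys] by simp_all

lemma set_replicate_subset_iff [simp]: "set (replicate k x) \<subseteq> A \<longleftrightarrow> k = 0 \<or> x \<in> A"
  by (cases k) auto

definition read_sym :: "nat list \<Rightarrow> nat" where
  "read_sym xs = (case xs of [] \<Rightarrow> 0 | s # _ \<Rightarrow> s)"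

lemma read_sym_simps [simp]: "read_sym [] = 0" "read_sym (x # xs) = x"
  by (simp_all add: read_sym_def)

lemma read_sym_append_blanks: "read_sym (xs @ replicate a 0) = read_sym xs"
  by (cases xs; cases a) auto

lemma blank_eq_read_sym: "blank_eq xs ys \<Longrightarrow> read_sym xs = read_sym ys"
  unfolding blank_eq_def by (metis read_sym_append_blanks)

lemma tl_append_blanks: "\<exists>a'. tl (xs @ replicate a 0) = tl xs @ replicate a' 0"
  by (cases xs) (auto intro: exI[of _ "a - 1"] simp: tl_replicate)

lemma blank_eq_tl: "blank_eq xs ys \<Longrightarrow> blank_eq (tl xs) (tl ys)"
  unfolding blank_eq_def by (metis tl_append_blanks)

lemma takeWhile_append_blanks:
  "takeWhile (\<lambda>a. a \<noteq> 0) (xs @ replicate n 0) = takeWhile (\<lambda>a. a \<noteq> 0) xs"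
  by (induction xs) (cases n; simp)+

lemma blank_eq_takeWhile:
  "blank_eq xs ys \<Longrightarrow> takeWhile (\<lambda>a. a \<noteq> 0) xs = takeWhile (\<lambda>a. a \<noteq> 0) ys"
  unfolding blank_eq_def by (metis takeWhile_append_blanks)

lemma config_eq_refl [simp]: "config_eq c c"
  by (simp add: config_eq_def)

lemma config_eq_trans: "config_eq c d \<Longrightarrow> config_eq d e \<Longrightarrow> config_eq c e"
  by (auto simp: config_eq_def intro: blank_eq_trans)

lemma tm_step_read_sym: "tm_step M (q, ls, rs) = (if q = 1 then (q, ls, rs) else
   (case delta M q (read_sym rs) of (q', w, mv) \<Rightarrow> (case mv of
       Stay \<Rightarrow> (q', ls, w # tl rs)
     | MoveR \<Rightarrow> (q', w # ls, tl rs)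
     | MoveL \<Rightarrow> (q', tl ls, read_sym ls # w # tl rs))))"
  by (cases rs; cases ls) (auto simp: tm_step_def split: move.split prod.split)

lemma tm_step_config_eq: "config_eq c d \<Longrightarrow> config_eq (tm_step M c) (tm_step M d)"
proof -
  assume cd: "config_eq c d"
  obtain q ls rs where c: "c = (q, ls, rs)" by (cases c) auto
  obtain q' ls' rs' where d: "d = (q', ls', rs')" by (cases d) auto
  have q: "q' = q" and l: "blank_eq ls ls'" and r: "blank_eq rs rs'"
    using cd c d by (auto simp: config_eq_def)
  show ?thesis
    unfolding c d q tm_step_read_sym blank_eq_read_sym[OF r, symmetric]
    using l r blank_eq_read_sym[OF l] blank_eq_tl[OF l] blank_eq_tl[OF r]
    by (auto simp: config_eq_def split: prod.split move.split)
qed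

lemma funpow_tm_step_config_eq:
  "config_eq c d \<Longrightarrow> config_eq ((tm_step M ^^ t) c) ((tm_step M ^^ t) d)"
  by (induction t) (auto intro: tm_step_config_eq)

definition reaches :: "tm \<Rightarrow> config \<Rightarrow> nat \<Rightarrow> config \<Rightarrow> bool" where
  "reaches M c t c' \<longleftrightarrow>
     (\<forall>j<t. fst ((tm_step M ^^ j) c) \<noteq> 1) \<and> config_eq ((tm_step M ^^ t) c) c'"

lemma reaches_0: "reaches M c 0 c"
  by (simp add: reaches_def)

lemma reaches_cong_left: "config_eq c d \<Longrightarrow> reaches M d t c' \<Longrightarrow> reaches M c t c'"
proof -
  assume cd: "config_eq c d" and run: "reaches M d t c'"
  have steps: "config_eq ((tm_step M ^^ j) c) ((tm_step M ^^ j) d)" for j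
    by (rule funpow_tm_step_config_eq[OF cd])
  then have "fst ((tm_step M ^^ j) c) = fst ((tm_step M ^^ j) d)" for j
    by (simp add: config_eq_def)
  then show ?thesis
    using run config_eq_trans[OF steps[of t]] by (simp add: reaches_def)
qed

lemma reaches_cong_right: "reaches M c t c' \<Longrightarrow> config_eq c' d' \<Longrightarrow> reaches M c t d'"
  unfolding reaches_def using config_eq_trans by meson

lemma reaches_trans: "reaches M c t1 c1 \<Longrightarrow> reaches M c1 t2 c2 \<Longrightarrow> reaches M c (t1 + t2) c2"
proof -
  assume r1: "reaches M c t1 c1" and r2: "reaches M c1 t2 c2"
  have e: "(tm_step M ^^ (t2 + j)) c = (tm_step M ^^ j) ((tm_step M ^^ t2) c)" for t2 j
    by (simp add: funpow_add add.commute)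
  have c1: "config_eq ((tm_step M ^^ t1) c) c1" using r1 by (simp add: reaches_def)
  have running: "fst ((tm_step M ^^ j) c) \<noteq> 1" if jlt: "j < t1 + t2" for j
  proof (cases "j < t1")
    case True then show ?thesis using r1 by (simp add: reaches_def)
  next
    case False
    define i where "i = j - t1"
    have j: "j = t1 + i" "i < t2" using False jlt by (auto simp: i_def)
    have "config_eq ((tm_step M ^^ j) c) ((tm_step M ^^ i) c1)"
      unfolding j e by (rule funpow_tm_step_config_eq[OF c1])
    moreover have "fst ((tm_step M ^^ i) c1) \<noteq> 1" using r2 j by (simp add: reaches_def)
    ultimately show ?thesis by (simp add: config_eq_def)
  qed
  have "config_eq ((tm_step M ^^ (t1 + t2)) c) ((tm_step M ^^ t2) c1)"
    unfolding e[of t1 t2] by (rule funpow_tm_step_config_eq[OF c1])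
  then have "config_eq ((tm_step M ^^ (t1 + t2)) c) c2"
    using r2 config_eq_trans by (auto simp: reaches_def)
  then show ?thesis using running by (simp add: reaches_def)
qed

lemma reaches_trans_via:
  "reaches M c t1 c1 \<Longrightarrow> config_eq c1 c1' \<Longrightarrow> reaches M c1' t2 c2 \<Longrightarrow>
   reaches M c (t1 + t2) c2"
  using reaches_trans reaches_cong_right by blast

lemma reaches_step: "q \<noteq> 1 \<Longrightarrow> tm_step M (q, ls, rs) = c' \<Longrightarrow> reaches M (q, ls, rs) 1 c'"
  by (simp add: reaches_def)

lemma reaches_stepR:
  "p \<noteq> 1 \<Longrightarrow> delta M p r = (q, w, MoveR) \<Longrightarrow> reaches M (p, ls, r # rs) 1 (q, w # ls, rs)"
  by (rule reaches_step) (auto simp: tm_step_read_sym)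

lemma reaches_stepS:
  "p \<noteq> 1 \<Longrightarrow> delta M p r = (q, w, Stay) \<Longrightarrow> reaches M (p, ls, r # rs) 1 (q, ls, w # rs)"
  by (rule reaches_step) (auto simp: tm_step_read_sym)

lemma reaches_scanR:
  assumes "q \<noteq> 1" "\<forall>s\<in>set ws. delta M q s = (q, f s, MoveR)"
  shows "reaches M (q, ls, ws @ rs) (length ws) (q, rev (map f ws) @ ls, rs)"
  using assms(2)
proof (induction ws arbitrary: ls)
  case Nil then show ?case by (simp add: reaches_0)
next
  case (Cons x ws)
  have "reaches M (q, ls, x # ws @ rs) 1 (q, f x # ls, ws @ rs)"
    using Cons.prems assms(1) by (intro reaches_stepR) auto
  from reaches_trans[OF this Cons.IH[of "f x # ls"]] Cons.prems show ?case by simp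
qed

lemma reaches_enterR:
  assumes "p \<noteq> 1" "delta M p r = (q, w, MoveR)" "q \<noteq> 1"
    "\<forall>s\<in>set ws. delta M q s = (q, f s, MoveR)"
  shows "reaches M (p, ls, r # ws @ rs) (Suc (length ws)) (q, rev (map f ws) @ w # ls, rs)"
  using reaches_trans[OF reaches_stepR[OF assms(1,2)] reaches_scanR[OF assms(3,4)]] by simp

lemma reaches_scanL:
  assumes "q \<noteq> 1" "\<forall>s\<in>set ws. delta M q s = (q, f s, MoveL)"
  shows "reaches M (q, tl (rev ws @ l # ls), hd (rev ws @ l # ls) # rs) (length ws)
           (q, ls, l # map f ws @ rs)"
  using assms(2)
proof (induction ws arbitrary: rs rule: rev_induct)
  case Nil then show ?case by (simp add: reaches_0)
next
  case (snoc x ws)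
  have "reaches M (q, rev ws @ l # ls, x # rs) 1
      (q, tl (rev ws @ l # ls), hd (rev ws @ l # ls) # f x # rs)"
    using snoc.prems assms(1)
    by (intro reaches_step) (auto simp: tm_step_read_sym read_sym_def split: list.split)
  from reaches_trans[OF this snoc.IH[of "f x # rs"]] snoc.prems show ?case by simp
qed

lemma reaches_enterL:
  assumes "p \<noteq> 1" "delta M p r = (q, w, MoveL)" "q \<noteq> 1"
    "\<forall>s\<in>set ws. delta M q s = (q, f s, MoveL)"
  shows "reaches M (p, rev ws @ l # ls, r # rs) (Suc (length ws)) (q, ls, l # map f ws @ w # rs)"
proof -
  have "reaches M (p, rev ws @ l # ls, r # rs) 1
      (q, tl (rev ws @ l # ls), hd (rev ws @ l # ls) # w # rs)"
    using assms by (intro reaches_step) (auto simp: tm_step_read_sym read_sym_def split: list.split)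
  from reaches_trans[OF this reaches_scanL[OF assms(3,4)]] show ?thesis by simp
qed

lemma reaches_conv:
  "reaches M c t c' \<Longrightarrow> c = d \<Longrightarrow> t = t' \<Longrightarrow> config_eq c' d' \<Longrightarrow> reaches M d t' d'"
  using reaches_cong_right by blast

text \<open>In the rule variants the configurations are equations, to be discharged by simp once
  the transition and the scanned word have been instantiated.\<close>

lemma reaches_scanR_rule:
  "q \<noteq> 1 \<Longrightarrow> \<forall>s\<in>set ws. delta M q s = (q, f s, MoveR) \<Longrightarrow> c = (q, ls, ws @ rs) \<Longrightarrow>
   t = length ws \<Longrightarrow> config_eq (q, rev (map f ws) @ ls, rs) c' \<Longrightarrow> reaches M c t c'"
  using reaches_scanR reaches_cong_right by blast

lemma reaches_enterL_rule:
  "p \<noteq> 1 \<Longrightarrow> delta M p r = (q, w, MoveL) \<Longrightarrow> q \<noteq> 1 \<Longrightarrow>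
   \<forall>s\<in>set ws. delta M q s = (q, f s, MoveL) \<Longrightarrow> c = (p, rev ws @ l # ls, r # rs) \<Longrightarrow>
   t = Suc (length ws) \<Longrightarrow> config_eq (q, ls, l # map f ws @ w # rs) c' \<Longrightarrow> reaches M c t c'"
  using reaches_enterL reaches_cong_right by blast

lemma reaches_enterR_rule:
  "p \<noteq> 1 \<Longrightarrow> delta M p r = (q, w, MoveR) \<Longrightarrow> q \<noteq> 1 \<Longrightarrow>
   \<forall>s\<in>set ws. delta M q s = (q, f s, MoveR) \<Longrightarrow> c = (p, ls, r # ws @ rs) \<Longrightarrow>
   t = Suc (length ws) \<Longrightarrow> config_eq (q, rev (map f ws) @ w # ls, rs) c' \<Longrightarrow> reaches M c t c'"
  using reaches_enterR reaches_cong_right by blast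

lemma reaches_stepR_rule:
  "p \<noteq> 1 \<Longrightarrow> delta M p r = (q, w, MoveR) \<Longrightarrow> c = (p, ls, r # rs) \<Longrightarrow>
   config_eq (q, w # ls, rs) c' \<Longrightarrow> reaches M c 1 c'"
  using reaches_stepR reaches_cong_right by blast

lemma reaches_stepS_rule:
  "p \<noteq> 1 \<Longrightarrow> delta M p r = (q, w, Stay) \<Longrightarrow> c = (p, ls, r # rs) \<Longrightarrow>
   config_eq (q, ls, w # rs) c' \<Longrightarrow> reaches M c 1 c'"
  using reaches_stepS reaches_cong_right by blast

section \<open>Sequential composition\<close>

text \<open>tm_wf constrains transitions only on symbols below nsyms, but a component of a
  composite machine also reads the other component's symbols; tm_total extends any
  well-formed machine to a closed one without changing its runs on its own tapes.\<close>

definition tm_closed :: "tm \<Rightarrow> bool" where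
  "tm_closed M \<longleftrightarrow> 2 \<le> nstates M \<and> 5 \<le> nsyms M \<and>
    (\<forall>q<nstates M. \<forall>s. fst (delta M q s) < nstates M \<and> fst (snd (delta M q s)) < nsyms M)"

lemma tm_closed_imp_wf: "tm_closed M \<Longrightarrow> tm_wf M"
  by (auto simp: tm_closed_def tm_wf_def)

definition tm_seq :: "tm \<Rightarrow> tm \<Rightarrow> tm" where
  "tm_seq M1 M2 = \<lparr>nstates = nstates M1 + nstates M2, nsyms = max (nsyms M1) (nsyms M2),
     delta = (\<lambda>q s.
       if q < nstates M1 then
         (case delta M1 q s of (q', w, mv) \<Rightarrow> (if q' = 1 then nstates M1 else q', w, mv))
       else if q - nstates M1 < nstates M2 then
         (case delta M2 (q - nstates M1) s of
            (q', w, mv) \<Rightarrow> (if q' = 1 then 1 else q' + nstates M1, w, mv))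
       else (1, 0, Stay))\<rparr>"

lemma tm_closed_seq:
  assumes "tm_closed M1" "tm_closed M2"
  shows "tm_closed (tm_seq M1 M2)"
proof -
  have sizes: "nstates (tm_seq M1 M2) = nstates M1 + nstates M2"
    "nsyms (tm_seq M1 M2) = max (nsyms M1) (nsyms M2)"
    by (simp_all add: tm_seq_def)
  have "fst (delta (tm_seq M1 M2) q s) < nstates M1 + nstates M2 \<and>
      fst (snd (delta (tm_seq M1 M2) q s)) < max (nsyms M1) (nsyms M2)"
    if "q < nstates M1 + nstates M2" for q s
  proof (cases "q < nstates M1")
    case True
    obtain q' w mv where d: "delta M1 q s = (q', w, mv)" by (cases "delta M1 q s") auto
    then have "q' < nstates M1" "w < nsyms M1"
      using assms(1) True unfolding tm_closed_def by (metis fst_conv snd_conv)+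
    then show ?thesis using True d assms(2) by (auto simp: tm_seq_def tm_closed_def)
  next
    case False
    then have lt: "q - nstates M1 < nstates M2" using that by simp
    obtain q' w mv where d: "delta M2 (q - nstates M1) s = (q', w, mv)"
      by (cases "delta M2 (q - nstates M1) s") auto
    then have "q' < nstates M2" "w < nsyms M2"
      using assms(2) lt unfolding tm_closed_def by (metis fst_conv snd_conv)+
    then show ?thesis using False lt d by (auto simp: tm_seq_def)
  qed
  then show ?thesis using assms(1) unfolding tm_closed_def sizes by (simp add: le_max_iff_disj)
qed

definition seq_left_config :: "nat \<Rightarrow> config \<Rightarrow> config" where
  "seq_left_config n c = (if fst c = 1 then n else fst c, snd c)"

definition seq_right_config :: "nat \<Rightarrow> config \<Rightarrow> config" where
  "seq_right_config n c = (if fst c = 1 then 1 else fst c + n, snd c)"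

lemma tm_seq_step_left:
  assumes "tm_closed M1" "q < nstates M1" "q \<noteq> 1"
  shows "tm_step (tm_seq M1 M2) (q, ls, rs) = seq_left_config (nstates M1) (tm_step M1 (q, ls, rs))"
  using assms
  by (auto simp: tm_step_read_sym tm_seq_def seq_left_config_def split: prod.split move.split)

lemma tm_step_closed_state:
  assumes "tm_closed M" "fst c < nstates M"
  shows "fst (tm_step M c) < nstates M"
proof -
  obtain q ls rs where c: "c = (q, ls, rs)" by (cases c)
  have "fst (delta M q s) < nstates M" for s using assms c by (auto simp: tm_closed_def)
  then show ?thesis
    using assms c by (auto simp: tm_step_read_sym split: prod.split move.split) (metis fst_conv)+
qed

lemma tm_seq_run_left:
  assumes "tm_closed M1" "fst c < nstates M1"
  shows "(\<forall>j<t. fst ((tm_step M1 ^^ j) c) \<noteq> 1) \<Longrightarrow>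
    (tm_step (tm_seq M1 M2) ^^ t) (seq_left_config (nstates M1) c)
      = seq_left_config (nstates M1) ((tm_step M1 ^^ t) c)
    \<and> fst ((tm_step M1 ^^ t) c) < nstates M1"
proof (induction t)
  case 0
  then show ?case using assms by simp
next
  case (Suc t)
  obtain q ls rs where qlr: "(tm_step M1 ^^ t) c = (q, ls, rs)" by (cases "(tm_step M1 ^^ t) c")
  have "q \<noteq> 1" using Suc.prems qlr by (metis fst_conv lessI)
  then show ?case
    using Suc qlr tm_seq_step_left[OF assms(1), where q=q and ls=ls and rs=rs]
      tm_step_closed_state[OF assms(1), of "(q, ls, rs)"]
    by (simp add: seq_left_config_def)
qed

lemma tm_seq_step_right:
  assumes "tm_closed M2" "2 \<le> nstates M1" "fst c < nstates M2"
  shows "tm_step (tm_seq M1 M2) (seq_right_config (nstates M1) c)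
           = seq_right_config (nstates M1) (tm_step M2 c)"
proof -
  obtain q ls rs where c: "c = (q, ls, rs)" by (cases c)
  show ?thesis
  proof (cases "q = 1")
    case True
    then show ?thesis using c by (simp add: seq_right_config_def tm_step_read_sym)
  next
    case False
    then show ?thesis
      using assms c
      by (auto simp: tm_step_read_sym tm_seq_def seq_right_config_def split: prod.split move.split)
  qed
qed

lemma tm_seq_run_right:
  assumes "tm_closed M2" "2 \<le> nstates M1" "fst c < nstates M2"
  shows "(tm_step (tm_seq M1 M2) ^^ t) (seq_right_config (nstates M1) c)
           = seq_right_config (nstates M1) ((tm_step M2 ^^ t) c)
         \<and> fst ((tm_step M2 ^^ t) c) < nstates M2"
proof (induction t)
  case 0
  then show ?case using assms by simp
next
  case (Suc t)
  then show ?case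
    using tm_seq_step_right[OF assms(1,2), of "(tm_step M2 ^^ t) c"]
      tm_step_closed_state[OF assms(1), of "(tm_step M2 ^^ t) c"]
    by simp
qed

lemma reaches_tm_seq_left:
  assumes "tm_closed M1" "reaches M1 (0, ls, rs) t (1, ls', rs')"
  shows "reaches (tm_seq M1 M2) (0, ls, rs) t (nstates M1, ls', rs')"
proof -
  let ?n = "nstates M1"
  have running: "\<forall>j<t. fst ((tm_step M1 ^^ j) (0, ls, rs)) \<noteq> 1"
    and final: "config_eq ((tm_step M1 ^^ t) (0, ls, rs)) (1, ls', rs')"
    using assms(2) by (simp_all add: reaches_def)
  have "0 < ?n" using assms(1) by (simp add: tm_closed_def)
  then have run: "(tm_step (tm_seq M1 M2) ^^ j) (0, ls, rs)
      = seq_left_config ?n ((tm_step M1 ^^ j) (0, ls, rs))" if "j \<le> t" for j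
    using tm_seq_run_left[OF assms(1), of "(0, ls, rs)" j M2] running that
    by (auto simp: seq_left_config_def)
  show ?thesis
    unfolding reaches_def using run running final
    by (auto simp: seq_left_config_def config_eq_def)
qed

lemma reaches_tm_seq_right:
  assumes "tm_closed M1" "tm_closed M2" "reaches M2 (0, ls, rs) t (1, ls', rs')"
  shows "reaches (tm_seq M1 M2) (nstates M1, ls, rs) t (1, ls', rs')"
proof -
  let ?n = "nstates M1"
  have n: "2 \<le> ?n" "0 < nstates M2" using assms(1,2) by (auto simp: tm_closed_def)
  have run: "(tm_step (tm_seq M1 M2) ^^ j) (?n, ls, rs)
      = seq_right_config ?n ((tm_step M2 ^^ j) (0, ls, rs))" for j
    using tm_seq_run_right[OF assms(2) n(1), of "(0, ls, rs)" j] n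
    by (simp add: seq_right_config_def)
  show ?thesis
    using assms(3) n unfolding reaches_def run
    by (auto simp: seq_right_config_def config_eq_def)
qed

lemma reaches_tm_seq:
  assumes "tm_closed M1" "tm_closed M2"
    "reaches M1 (0, ls, rs) t1 (1, ls1, rs1)" "reaches M2 (0, ls1, rs1) t2 (1, ls2, rs2)"
  shows "reaches (tm_seq M1 M2) (0, ls, rs) (t1 + t2) (1, ls2, rs2)"
  using reaches_trans[OF reaches_tm_seq_left[OF assms(1,3)] reaches_tm_seq_right[OF assms(1,2,4)]] .

definition tm_total :: "tm \<Rightarrow> tm" where
  "tm_total M = \<lparr>nstates = nstates M, nsyms = max 8 (nsyms M),
     delta = (\<lambda>q s. if q < nstates M \<and> s < nsyms M then delta M q s else (1, 0, Stay))\<rparr>"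

lemma tm_closed_total:
  assumes "tm_wf M"
  shows "tm_closed (tm_total M)"
proof -
  have "fst (delta M q s) < nstates M \<and> fst (snd (delta M q s)) < nsyms M"
    if "q < nstates M" "s < nsyms M" for q s
    using assms that unfolding tm_wf_def by blast
  then show ?thesis
    using assms unfolding tm_closed_def tm_wf_def tm_total_def by (auto simp: less_max_iff_disj)
qed

definition in_range_config :: "tm \<Rightarrow> config \<Rightarrow> bool" where
  "in_range_config M c \<longleftrightarrow> fst c < nstates M \<and>
     (\<forall>x\<in>set (fst (snd c)). x < nsyms M) \<and> (\<forall>x\<in>set (snd (snd c)). x < nsyms M)"

lemma read_sym_less: "\<forall>x\<in>set xs. x < n \<Longrightarrow> 0 < n \<Longrightarrow> read_sym xs < n"
  by (cases xs) auto

lemma tl_less: "\<forall>x\<in>set xs. x < n \<Longrightarrow> \<forall>x\<in>set (tl xs). x < n"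
  by (cases xs) auto

lemma tm_total_step:
  assumes "tm_wf M" "in_range_config M c"
  shows "tm_step (tm_total M) c = tm_step M c \<and> in_range_config M (tm_step M c)"
proof -
  obtain q ls rs where c: "c = (q, ls, rs)" by (cases c)
  have n: "0 < nsyms M" "1 < nstates M" using assms(1) by (auto simp: tm_wf_def)
  have q: "q < nstates M" and L: "\<forall>x\<in>set ls. x < nsyms M" and R: "\<forall>x\<in>set rs. x < nsyms M"
    using assms(2) c by (auto simp: in_range_config_def)
  have h: "read_sym rs < nsyms M" "read_sym ls < nsyms M"
    using read_sym_less[OF R n(1)] read_sym_less[OF L n(1)] by auto
  obtain q' w mv where d: "delta M q (read_sym rs) = (q', w, mv)"
    by (cases "delta M q (read_sym rs)") auto
  have qw: "q' < nstates M" "w < nsyms M"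
    using assms(1) q h(1) d unfolding tm_wf_def by (metis fst_conv snd_conv)+
  have "delta (tm_total M) q (read_sym rs) = delta M q (read_sym rs)"
    using q h by (simp add: tm_total_def)
  then show ?thesis
    unfolding c tm_step_read_sym d using qw q L R h tl_less[OF R] tl_less[OF L] n
    by (cases mv) (auto simp: in_range_config_def)
qed

lemma tm_total_run:
  assumes "tm_wf M" "in_range_config M c"
  shows "(tm_step (tm_total M) ^^ t) c = (tm_step M ^^ t) c \<and> in_range_config M ((tm_step M ^^ t) c)"
  by (induction t) (use assms tm_total_step in auto)

lemma funpow_tm_step_halted: "fst c = 1 \<Longrightarrow> (tm_step M ^^ k) c = c"
proof (induction k)
  case (Suc k)
  obtain q ls rs where "c = (q, ls, rs)" by (cases c)
  then show ?case using Suc by (simp add: tm_step_read_sym)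
qed simp

lemma tm_outputs_within_reaches_total:
  assumes "tm_wf M" "\<forall>x\<in>set xs. x < 5" "tm_outputs_within M xs T y"
  shows "\<exists>s\<le>T. \<exists>c. reaches (tm_total M) (0, [], xs) s c \<and>
           fst c = 1 \<and> takeWhile (\<lambda>a. a \<noteq> 0) (snd (snd c)) = y"
proof -
  obtain s where s: "s \<le> T" "fst (tm_run M s xs) = 1"
    "takeWhile (\<lambda>a. a \<noteq> 0) (snd (snd (tm_run M s xs))) = y"
    using assms(3) unfolding tm_outputs_within_def by blast
  define s0 where "s0 = (LEAST s. fst (tm_run M s xs) = 1)"
  have s0: "fst (tm_run M s0 xs) = 1" "s0 \<le> s"
    using s(2) unfolding s0_def by (auto intro: LeastI Least_le)
  have running: "fst (tm_run M j xs) \<noteq> 1" if "j < s0" for j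
    using that not_less_Least unfolding s0_def by blast
  have "tm_run M s xs = (tm_step M ^^ (s - s0)) (tm_run M s0 xs)"
    unfolding tm_run_def using s0(2) funpow_add[of "s - s0" s0 "tm_step M"] by simp
  then have same_output: "tm_run M s xs = tm_run M s0 xs" using funpow_tm_step_halted[OF s0(1)] by simp
  have "in_range_config M (0, [], xs)" using assms(1,2) by (auto simp: in_range_config_def tm_wf_def)
  then have "(tm_step (tm_total M) ^^ j) (0, [], xs) = tm_run M j xs" for j
    using tm_total_run[OF assms(1)] by (simp add: tm_run_def)
  then have "reaches (tm_total M) (0, [], xs) s0 (tm_run M s0 xs)"
    unfolding reaches_def using running by simp
  moreover have "s0 \<le> T" using s0 s by simp
  moreover have "takeWhile (\<lambda>a. a \<noteq> 0) (snd (snd (tm_run M s0 xs))) = y" using s same_output by simp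
  ultimately show ?thesis using s0(1) by blast
qed

lemma tm_outputs_within_if_reaches:
  assumes "reaches M (0, [], xs) t c" "fst c = 1" "t \<le> T"
  shows "tm_outputs_within M xs T (takeWhile (\<lambda>a. a \<noteq> 0) (snd (snd c)))"
proof -
  have "config_eq (tm_run M t xs) c" using assms(1) by (simp add: reaches_def tm_run_def)
  then have "fst (tm_run M t xs) = 1"
    "takeWhile (\<lambda>a. a \<noteq> 0) (snd (snd (tm_run M t xs))) = takeWhile (\<lambda>a. a \<noteq> 0) (snd (snd c))"
    using assms(2) blank_eq_takeWhile by (auto simp: config_eq_def)
  then show ?thesis unfolding tm_outputs_within_def using assms(3) by blast
qed

section \<open>Machines on unary blocks\<close>

definition drop_suffix_delta :: "nat \<Rightarrow> nat \<Rightarrow> nat \<times> nat \<times> move" where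
  "drop_suffix_delta q s = (if s < 8 then
     (if q = 0 then (if s = 0 then (2, 0, MoveL) else (0, s, MoveR))
      else if q = 2 then (if s = 2 then (2, 0, MoveL) else (3, 0, MoveL))
      else if q = 3 then (if s = 0 then (1, 0, MoveR) else (3, s, MoveL))
      else (1, 0, Stay)) else (1, 0, Stay))"

definition drop_suffix_tm :: tm where
  "drop_suffix_tm = \<lparr>nstates = 4, nsyms = 8, delta = drop_suffix_delta\<rparr>"

lemma tm_closed_drop_suffix: "tm_closed drop_suffix_tm"
  by (auto simp: tm_closed_def drop_suffix_tm_def drop_suffix_delta_def)

lemma drop_suffix_tm_reaches:
  assumes E: "set E \<subseteq> {1, 2, 3}"
  shows "reaches drop_suffix_tm (0, [], E @ twos n @ [3] @ twos k)
           (2 * length E + 2 * n + 2 * k + 4) (1, [], E @ twos n)"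
proof -
  let ?x = "E @ twos n @ [3] @ twos k"
  let ?y = "E @ twos n"
  let ?zeros = "map (\<lambda>_. 0) (twos k)"
  have to_end: "reaches drop_suffix_tm (0, [], ?x @ []) (length ?x) (0, rev (map id ?x) @ [], [])"
    by (rule reaches_scanR) (use E in \<open>auto simp: drop_suffix_tm_def drop_suffix_delta_def\<close>)
  have erase: "reaches drop_suffix_tm (0, rev (twos k) @ 3 # rev ?y, [0]) (Suc k)
      (2, rev ?y, 3 # ?zeros @ [0])"
    by (rule reaches_enterL_rule[where ws="twos k" and f="\<lambda>_. 0" and l=3 and ls="rev ?y" and rs="[]"])
      (auto simp: drop_suffix_tm_def drop_suffix_delta_def config_eq_def)
  have to_start: "reaches drop_suffix_tm (2, rev ?y @ [0], 3 # ?zeros @ [0]) (Suc (length ?y))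
      (3, [], 0 # map id ?y @ 0 # ?zeros @ [0])"
    by (rule reaches_enterL) (use E in \<open>auto simp: drop_suffix_tm_def drop_suffix_delta_def\<close>)
  have halt: "reaches drop_suffix_tm (3, [], 0 # map id ?y @ 0 # ?zeros @ [0]) 1 (1, [], ?y)"
    by (rule reaches_stepR_rule) (auto simp: drop_suffix_tm_def drop_suffix_delta_def config_eq_def)
  have "reaches drop_suffix_tm (0, [], ?x @ []) (length ?x + Suc k + Suc (length ?y) + 1) (1, [], ?y)"
    by (rule reaches_trans[OF reaches_trans_via[OF reaches_trans_via[OF to_end _ erase] _ to_start] halt])
      (simp_all add: config_eq_def)
  then show ?thesis by (rule reaches_conv) auto
qed

text \<open>One round on a tape ending with unary blocks 2^u 5 2^v (the head on the blank after
  them) appends 5 2^(2 + u v): it writes 5 2 2 and then, for each 2 of the first block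
  (marked 6 once used), copies the second block (marked 7 while copying) to the end.\<close>

definition round_delta :: "nat \<Rightarrow> nat \<Rightarrow> nat \<times> nat \<times> move" where
  "round_delta q s = (if s < 8 then
     (if q = 0 then (2, 5, MoveR)
      else if q = 2 then (3, 2, MoveR)
      else if q = 3 then (5, 2, MoveL)
      else if q = 5 then (if s = 2 then (5, 2, MoveL) else (6, s, MoveL))
      else if q = 6 then (if s = 2 then (6, 2, MoveL) else (7, s, MoveL))
      else if q = 7 then (if s = 2 then (7, 2, MoveL) else (8, s, MoveR))
      else if q = 8 then (if s = 2 then (9, 6, MoveR) else (13, s, MoveL))
      else if q = 9 then (if s = 2 then (9, 2, MoveR) else (10, s, MoveR))
      else if q = 10 then (if s = 7 then (10, 7, MoveR) else if s = 2 then (11, 7, MoveR) else (12, s, MoveL))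
      else if q = 11 then (if s = 0 then (14, 2, MoveL) else (11, s, MoveR))
      else if q = 14 then (if s = 2 then (14, 2, MoveL) else (15, s, MoveL))
      else if q = 15 then (if s = 2 then (15, 2, MoveL) else (10, s, MoveR))
      else if q = 12 then (if s = 7 then (12, 2, MoveL) else (7, s, MoveL))
      else if q = 13 then (if s = 6 then (13, 2, MoveL) else (16, s, MoveR))
      else if q = 16 then (if s = 0 then (1, 0, Stay) else (16, s, MoveR))
      else (1, 0, Stay)) else (1, 0, Stay))"

definition round_tm :: tm where
  "round_tm = \<lparr>nstates = 17, nsyms = 8, delta = round_delta\<rparr>"

lemma tm_closed_round: "tm_closed round_tm"
  by (auto simp: tm_closed_def round_tm_def round_delta_def)

lemma delta_round_tm: "delta round_tm q s = round_delta q s"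
  by (simp add: round_tm_def)

lemma round_copy_step_reaches:
  assumes "a < v"
  shows "reaches round_tm (10, rev (P @ replicate a 7), twos (v - a) @ 5 # twos (c + a))
           (2 * (c + v) + 3) (10, rev (P @ replicate (Suc a) 7), twos (v - Suc a) @ 5 # twos (c + Suc a))"
proof -
  let ?ws = "twos (v - Suc a) @ 5 # twos (c + a)"
  let ?Pa = "rev (P @ replicate a 7)"
  have va: "v - a = Suc (v - Suc a)" using assms by simp
  have to_end: "reaches round_tm (10, ?Pa, twos (v - a) @ 5 # twos (c + a))
      (Suc (length ?ws)) (11, rev ?ws @ 7 # ?Pa, [0])"
    by (rule reaches_enterR_rule[where p=10 and r=2 and q=11 and w=7 and ws="?ws" and f=id and rs="[]"])
       (auto simp: delta_round_tm round_delta_def config_eq_def va)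
  have rewind: "reaches round_tm (11, rev ?ws @ 7 # ?Pa, [0]) (Suc (c + a))
      (14, rev (twos (v - Suc a)) @ 7 # ?Pa, 5 # twos (c + a) @ [2])"
    by (rule reaches_enterL_rule[where p=11 and r=0 and q=14 and w=2 and ws="twos (c + a)" and f=id
          and l=5 and ls="rev (twos (v - Suc a)) @ 7 # ?Pa" and rs="[]"])
       (auto simp: delta_round_tm round_delta_def config_eq_def)
  have back_to_mark: "reaches round_tm (14, rev (twos (v - Suc a)) @ 7 # ?Pa, 5 # twos (c + a) @ [2])
      (Suc (v - Suc a)) (15, ?Pa, 7 # twos (v - Suc a) @ 5 # twos (c + a) @ [2])"
    by (rule reaches_enterL_rule[where p=14 and r=5 and q=15 and w=5 and ws="twos (v - Suc a)" and f=id
          and l=7 and ls="?Pa" and rs="twos (c + a) @ [2]"])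
       (auto simp: delta_round_tm round_delta_def config_eq_def)
  have next_symbol: "reaches round_tm (15, ?Pa, 7 # twos (v - Suc a) @ 5 # twos (c + a) @ [2])
      1 (10, rev (P @ replicate (Suc a) 7), twos (v - Suc a) @ 5 # twos (c + Suc a))"
    by (rule reaches_stepR_rule[where p=15 and r=7 and q=10 and w=7])
       (auto simp: delta_round_tm round_delta_def config_eq_def replicate_app_Cons_same)
  show ?thesis
    using reaches_trans[OF reaches_trans[OF reaches_trans[OF to_end rewind] back_to_mark] next_symbol]
    by (rule reaches_conv) (use assms in auto)
qed

lemma round_copy_reaches:
  assumes "a \<le> v"
  shows "reaches round_tm (10, rev (P @ replicate a 7), twos (v - a) @ 5 # twos (c + a))
           ((v - a) * (2 * (c + v) + 3)) (10, rev (P @ replicate v 7), 5 # twos (c + v))"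
  using assms
proof (induction "v - a" arbitrary: a)
  case 0
  then show ?case by (simp add: reaches_0)
next
  case (Suc d)
  then have "d = v - Suc a" "Suc a \<le> v" by auto
  from reaches_trans[OF round_copy_step_reaches Suc.hyps(1)[OF this]] this(2)
  have "reaches round_tm (10, rev (P @ replicate a 7), twos (v - a) @ 5 # twos (c + a))
      (2 * (c + v) + 3 + (v - Suc a) * (2 * (c + v) + 3)) (10, rev (P @ replicate v 7), 5 # twos (c + v))"
    by simp
  moreover have "v - a = Suc (v - Suc a)" using \<open>Suc a \<le> v\<close> by simp
  ultimately show ?case by simp
qed

lemma round_product_step_reaches:
  assumes "j < u"
  shows "reaches round_tm (8, rev (W @ replicate j 6), twos (u - j) @ 5 # twos v @ 5 # twos (2 + j * v))
           (2 * (u - j) + v * (2 * (2 + j * v + v) + 3) + v + 3)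
           (8, rev (W @ replicate (Suc j) 6), twos (u - Suc j) @ 5 # twos v @ 5 # twos (2 + Suc j * v))"
proof -
  have uj: "u - j = Suc (u - Suc j)" using assms by simp
  let ?c = "2 + j * v"
  let ?W = "W @ replicate (Suc j) 6 @ twos (u - Suc j)"
  let ?Wj = "rev (W @ replicate j 6)"
  have mark: "reaches round_tm (8, ?Wj, twos (u - j) @ 5 # twos v @ 5 # twos ?c)
      (Suc (u - Suc j)) (9, rev (twos (u - Suc j)) @ 6 # ?Wj, 5 # twos v @ 5 # twos ?c)"
    by (rule reaches_enterR_rule[where p=8 and r=2 and q=9 and w=6 and ws="twos (u - Suc j)" and f=id
          and rs="5 # twos v @ 5 # twos ?c" and ls="?Wj"])
       (auto simp: delta_round_tm round_delta_def config_eq_def uj)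
  have enter: "reaches round_tm (9, rev (twos (u - Suc j)) @ 6 # ?Wj, 5 # twos v @ 5 # twos ?c)
      1 (10, rev ((?W @ [5]) @ replicate 0 7), twos (v - 0) @ 5 # twos (?c + 0))"
    by (rule reaches_stepR_rule[where p=9 and r=5 and q=10 and w=5])
       (auto simp: delta_round_tm round_delta_def config_eq_def replicate_app_Cons_same)
  have unmark_copy: "reaches round_tm (10, rev ((?W @ [5]) @ replicate v 7), 5 # twos (?c + v))
      (Suc v) (12, rev ?W, 5 # twos v @ 5 # twos (?c + v))"
    by (rule reaches_enterL_rule[where p=10 and r=5 and q=12 and w=5 and ws="replicate v 7"
          and f="\<lambda>s. if s = 7 then 2 else s" and l=5 and ls="rev ?W" and rs="twos (?c + v)"])
       (auto simp: delta_round_tm round_delta_def config_eq_def)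
  have rewind: "reaches round_tm (12, rev ?W, 5 # twos v @ 5 # twos (?c + v))
      (Suc (u - Suc j)) (7, ?Wj, 6 # twos (u - Suc j) @ 5 # twos v @ 5 # twos (?c + v))"
    by (rule reaches_enterL_rule[where p=12 and r=5 and q=7 and w=5 and ws="twos (u - Suc j)" and f=id
          and l=6 and ls="?Wj" and rs="twos v @ 5 # twos (?c + v)"])
       (auto simp: delta_round_tm round_delta_def config_eq_def replicate_app_Cons_same)
  have next_mark: "reaches round_tm (7, ?Wj, 6 # twos (u - Suc j) @ 5 # twos v @ 5 # twos (?c + v))
      1 (8, rev (W @ replicate (Suc j) 6), twos (u - Suc j) @ 5 # twos v @ 5 # twos (2 + Suc j * v))"
    by (rule reaches_stepR_rule[where p=7 and r=6 and q=8 and w=6])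
       (auto simp: delta_round_tm round_delta_def config_eq_def replicate_app_Cons_same
         add.commute add.left_commute)
  show ?thesis
    using reaches_trans[OF reaches_trans[OF reaches_trans[OF reaches_trans[OF reaches_trans[OF
        mark enter] round_copy_reaches[of 0 v "?W @ [5]" ?c]] unmark_copy] rewind] next_mark]
    by (rule reaches_conv) (simp_all add: uj)
qed

lemma round_product_reaches:
  assumes "j \<le> u" "u + v + 2 + u * v \<le> L"
  shows "\<exists>t \<le> (u - j) * ((v + 1) * (3 * L + 5)).
    reaches round_tm (8, rev (W @ replicate j 6), twos (u - j) @ 5 # twos v @ 5 # twos (2 + j * v))
      t (8, rev (W @ replicate u 6), 5 # twos v @ 5 # twos (2 + u * v))"
  using assms
proof (induction "u - j" arbitrary: j)
  case 0
  then show ?case by (auto intro: exI[of _ 0] reaches_0)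
next
  case (Suc d)
  let ?K = "(v + 1) * (3 * L + 5)"
  have j: "j < u" "d = u - Suc j" using Suc.hyps(2) by auto
  obtain t where t: "t \<le> (u - Suc j) * ?K" and rest:
      "reaches round_tm (8, rev (W @ replicate (Suc j) 6), twos (u - Suc j) @ 5 # twos v @ 5 # twos (2 + Suc j * v))
         t (8, rev (W @ replicate u 6), 5 # twos v @ 5 # twos (2 + u * v))"
    using Suc.hyps(1)[OF j(2)] j(1) Suc.prems(2) by auto
  have "2 + j * v + v \<le> L"
    using Suc.prems(2) mult_le_mono1[of "Suc j" u v] j(1) by simp
  then have "v * (2 * (2 + j * v + v) + 3) \<le> v * (3 * L + 5)" by (intro mult_le_mono2) simp
  moreover have "2 * (u - j) + v + 3 \<le> 3 * L + 5" using Suc.prems(2) by simp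
  ultimately have "2 * (u - j) + v * (2 * (2 + j * v + v) + 3) + v + 3 \<le> v * (3 * L + 5) + (3 * L + 5)"
    by linarith
  then have "2 * (u - j) + v * (2 * (2 + j * v + v) + 3) + v + 3 \<le> ?K" by (simp add: algebra_simps)
  moreover have "u - j = Suc (u - Suc j)" using j(1) by simp
  then have "(u - j) * ?K = ?K + (u - Suc j) * ?K" by (simp only: mult_Suc)
  ultimately show ?case
    using reaches_trans[OF round_product_step_reaches[OF j(1)] rest] t
    by (intro exI[of _ "2 * (u - j) + v * (2 * (2 + j * v + v) + 3) + v + 3 + t"]) simp
qed

lemma round_prologue_reaches:
  assumes wl: "wl < 8" "wl \<noteq> 2" "wl \<noteq> 6"
  shows "reaches round_tm (0, rev (W @ wl # twos u @ 5 # twos v), [0]) (u + v + 7)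
           (8, rev (W @ [wl]), twos u @ 5 # twos v @ 5 # twos 2)"
proof -
  let ?X = "W @ wl # twos u @ 5 # twos v"
  have write_5: "reaches round_tm (0, rev ?X, [0]) 1 (2, 5 # rev ?X, [0])"
    by (rule reaches_stepR_rule[where p=0 and r=0 and q=2 and w=5])
       (auto simp: delta_round_tm round_delta_def config_eq_def)
  have write_2: "reaches round_tm (2, 5 # rev ?X, [0]) 1 (3, 2 # 5 # rev ?X, [0])"
    by (rule reaches_stepR_rule[where p=2 and r=0 and q=3 and w=2])
       (auto simp: delta_round_tm round_delta_def config_eq_def)
  have write_2': "reaches round_tm (3, 2 # 5 # rev ?X, [0]) 2 (5, rev ?X, [5, 2, 2])"
    by (rule reaches_enterL_rule[where p=3 and r=0 and q=5 and w=2 and ws="[2]" and f=id and l=5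
          and ls="rev ?X" and rs="[]"])
       (auto simp: delta_round_tm round_delta_def config_eq_def)
  have skip_v: "reaches round_tm (5, rev ?X, [5, 2, 2]) (Suc v)
      (6, rev (W @ wl # twos u), 5 # twos v @ [5, 2, 2])"
    by (rule reaches_enterL_rule[where p=5 and r=5 and q=6 and w=5 and ws="twos v" and f=id and l=5
          and ls="rev (W @ wl # twos u)" and rs="[2,2]"])
       (auto simp: delta_round_tm round_delta_def config_eq_def)
  have skip_u: "reaches round_tm (6, rev (W @ wl # twos u), 5 # twos v @ [5, 2, 2]) (Suc u)
      (7, rev W, wl # twos u @ 5 # twos v @ [5, 2, 2])"
    by (rule reaches_enterL_rule[where p=6 and r=5 and q=7 and w=5 and ws="twos u" and f=id and l=wl
          and ls="rev W" and rs="twos v @ [5,2,2]"])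
       (auto simp: delta_round_tm round_delta_def config_eq_def)
  have start: "reaches round_tm (7, rev W, wl # twos u @ 5 # twos v @ [5, 2, 2]) 1
      (8, rev (W @ [wl]), twos u @ 5 # twos v @ 5 # twos 2)"
    by (rule reaches_stepR_rule[where p=7 and r=wl and q=8 and w=wl])
       (use wl in \<open>auto simp: delta_round_tm round_delta_def config_eq_def numeral_2_eq_2\<close>)
  show ?thesis
    using reaches_trans[OF reaches_trans[OF reaches_trans[OF reaches_trans[OF reaches_trans[OF
        write_5 write_2] write_2'] skip_v] skip_u] start]
    by (rule reaches_conv) simp_all
qed

lemma round_epilogue_reaches:
  assumes wl: "wl < 8" "wl \<noteq> 2" "wl \<noteq> 6"
  shows "reaches round_tm (8, rev ((W @ [wl]) @ replicate u 6), 5 # twos v @ 5 # twos c)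
           (2 * u + v + c + 5) (1, rev (W @ wl # twos u @ 5 # twos v @ 5 # twos c), [])"
proof -
  have unmark_u: "reaches round_tm (8, rev ((W @ [wl]) @ replicate u 6), 5 # twos v @ 5 # twos c) (Suc u)
      (13, rev W, wl # twos u @ 5 # twos v @ 5 # twos c)"
    by (rule reaches_enterL_rule[where p=8 and r=5 and q=13 and w=5 and ws="replicate u 6"
          and f="\<lambda>s. if s = 6 then 2 else s" and l=wl and ls="rev W" and rs="twos v @ 5 # twos c"])
       (auto simp: delta_round_tm round_delta_def config_eq_def)
  have to_end: "reaches round_tm (13, rev W, wl # twos u @ 5 # twos v @ 5 # twos c)
      (Suc (u + 1 + v + 1 + c)) (16, rev (W @ wl # twos u @ 5 # twos v @ 5 # twos c), [0])"
    by (rule reaches_enterR_rule[where p=13 and r=wl and q=16 and w=wl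
          and ws="twos u @ 5 # twos v @ 5 # twos c" and f=id and ls="rev W" and rs="[]"])
       (use wl in \<open>auto simp: delta_round_tm round_delta_def config_eq_def\<close>)
  have halt: "reaches round_tm (16, rev (W @ wl # twos u @ 5 # twos v @ 5 # twos c), [0]) 1
      (1, rev (W @ wl # twos u @ 5 # twos v @ 5 # twos c), [])"
    by (rule reaches_stepS_rule[where p=16 and r=0 and q=1 and w=0])
       (auto simp: delta_round_tm round_delta_def config_eq_def)
  show ?thesis
    using reaches_trans[OF reaches_trans[OF unmark_u to_end] halt] by (rule reaches_conv) simp_all
qed

lemma round_reaches:
  assumes wl: "wl < 8" "wl \<noteq> 2" "wl \<noteq> 6"
    and L: "L = length W + u + v + 5 + u * v"
  shows "\<exists>t \<le> (u + 2) * ((v + 1) * (3 * L + 5)).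
    reaches round_tm (0, rev (W @ wl # twos u @ 5 # twos v), [0]) t
      (1, rev (W @ wl # twos u @ 5 # twos v @ 5 # twos (2 + u * v)), [])"
proof -
  let ?K = "(v + 1) * (3 * L + 5)"
  obtain t where t: "t \<le> u * ?K" and product:
      "reaches round_tm (8, rev (W @ [wl]), twos u @ 5 # twos v @ 5 # twos 2)
         t (8, rev ((W @ [wl]) @ replicate u 6), 5 # twos v @ 5 # twos (2 + u * v))"
    using round_product_reaches[of 0 u v L "W @ [wl]"] L by auto
  have "u + v + 7 + (2 * u + v + (2 + u * v) + 5) \<le> 3 * L + 5" using L by simp
  also have "\<dots> \<le> ?K" by simp
  finally have "u + v + 7 + t + (2 * u + v + (2 + u * v) + 5) \<le> ?K + u * ?K" using t by linarith
  also have "\<dots> \<le> (u + 2) * ?K" by simp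
  finally show ?thesis
    using reaches_trans[OF reaches_trans[OF round_prologue_reaches[OF wl] product]
        round_epilogue_reaches[OF wl]]
    by blast
qed

definition init_delta :: "nat \<Rightarrow> nat \<Rightarrow> nat \<times> nat \<times> move" where
  "init_delta q s = (if s < 8 then
     (if q = 0 then (if s = 0 then (2, 5, MoveR) else (0, s, MoveR))
      else if q = 2 then (3, 2, MoveR)
      else if q = 3 then (1, 2, MoveR)
      else (1, 0, Stay)) else (1, 0, Stay))"

definition init_tm :: tm where
  "init_tm = \<lparr>nstates = 4, nsyms = 8, delta = init_delta\<rparr>"

lemma tm_closed_init: "tm_closed init_tm"
  by (auto simp: tm_closed_def init_tm_def init_delta_def)

lemma init_tm_reaches:
  assumes "set x \<subseteq> {1, 2, 3}"
  shows "reaches init_tm (0, [], x) (length x + 3) (1, rev (x @ [5, 2, 2]), [])"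
proof -
  have to_end: "reaches init_tm (0, [], x) (length x) (0, rev x, [0])"
    by (rule reaches_scanR_rule[where q=0 and ws=x and f=id and ls="[]" and rs="[]"])
       (use assms in \<open>auto simp: init_tm_def init_delta_def config_eq_def\<close>)
  have write_5: "reaches init_tm (0, rev x, [0]) 1 (2, 5 # rev x, [0])"
    by (rule reaches_stepR_rule[where p=0 and r=0 and q=2 and w=5])
       (auto simp: init_tm_def init_delta_def config_eq_def)
  have write_2: "reaches init_tm (2, 5 # rev x, [0]) 1 (3, 2 # 5 # rev x, [0])"
    by (rule reaches_stepR_rule[where p=2 and r=0 and q=3 and w=2])
       (auto simp: init_tm_def init_delta_def config_eq_def)
  have write_2': "reaches init_tm (3, 2 # 5 # rev x, [0]) 1 (1, rev (x @ [5, 2, 2]), [])"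
    by (rule reaches_stepR_rule[where p=3 and r=0 and q=1 and w=2])
       (auto simp: init_tm_def init_delta_def config_eq_def)
  show ?thesis
    using reaches_trans[OF reaches_trans[OF reaches_trans[OF to_end write_5] write_2] write_2']
    by (rule reaches_conv) auto
qed

text \<open>The cleanup machine turns every separator 5 into 2, except the last one, which
  becomes 3: all blocks but the last merge into a single unary number.\<close>

definition cleanup_delta :: "nat \<Rightarrow> nat \<Rightarrow> nat \<times> nat \<times> move" where
  "cleanup_delta q s = (if s < 8 then
     (if q = 0 then (2, 0, MoveL)
      else if q = 2 then (if s = 2 then (2, 2, MoveL) else (3, 3, MoveL))
      else if q = 3 then (if s = 0 then (1, 0, MoveR) else if s = 5 then (3, 2, MoveL) else (3, s, MoveL))
      else (1, 0, Stay)) else (1, 0, Stay))"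

definition cleanup_tm :: tm where
  "cleanup_tm = \<lparr>nstates = 4, nsyms = 8, delta = cleanup_delta\<rparr>"

lemma tm_closed_cleanup: "tm_closed cleanup_tm"
  by (auto simp: tm_closed_def cleanup_tm_def cleanup_delta_def)

definition unmark :: "nat \<Rightarrow> nat" where
  "unmark s = (if s = 5 then 2 else s)"

lemma cleanup_tm_reaches:
  assumes "set Y \<subseteq> {1, 2, 3, 5}"
  shows "reaches cleanup_tm (0, rev (Y @ 5 # twos k), []) (k + length Y + 3)
           (1, [], map unmark Y @ 3 # twos k)"
proof -
  have skip_k: "reaches cleanup_tm (0, rev (Y @ 5 # twos k), [0]) (Suc k)
      (2, rev Y @ [0], 5 # twos k @ [0])"
    by (rule reaches_enterL_rule[where p=0 and r=0 and q=2 and w=0 and ws="twos k" and f=id and l=5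
          and ls="rev Y" and rs="[]"])
       (auto simp: cleanup_tm_def cleanup_delta_def config_eq_def)
  have unmark_Y: "reaches cleanup_tm (2, rev Y @ [0], 5 # twos k @ [0]) (Suc (length Y))
      (3, [], 0 # map unmark Y @ 3 # twos k @ [0])"
    by (rule reaches_enterL_rule[where p=2 and r=5 and q=3 and w=3 and ws=Y and f=unmark and l=0
          and ls="[]" and rs="twos k @ [0]"])
       (use assms in \<open>auto simp: cleanup_tm_def cleanup_delta_def config_eq_def unmark_def\<close>)
  have halt: "reaches cleanup_tm (3, [], 0 # map unmark Y @ 3 # twos k @ [0]) 1
      (1, [], map unmark Y @ 3 # twos k)"
    by (rule reaches_stepR_rule[where p=3 and r=0 and q=1 and w=0])
       (auto simp: cleanup_tm_def cleanup_delta_def config_eq_def)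
  have "reaches cleanup_tm (0, rev (Y @ 5 # twos k), [0]) (k + length Y + 3)
      (1, [], map unmark Y @ 3 # twos k)"
    using reaches_trans[OF reaches_trans[OF skip_k unmark_Y] halt] by (rule reaches_conv) auto
  then show ?thesis by (rule reaches_cong_left[rotated]) (simp add: config_eq_def)
qed

section \<open>Iterated rounds\<close>

fun round_blocks :: "nat \<Rightarrow> nat \<Rightarrow> nat \<times> nat" where
  "round_blocks n 0 = (n, 2)"
| "round_blocks n (Suc j) =
     (snd (round_blocks n j), 2 + fst (round_blocks n j) * snd (round_blocks n j))"

fun round_tape :: "nat \<Rightarrow> nat \<Rightarrow> nat list" where
  "round_tape n 0 = twos n @ [5, 2, 2]"
| "round_tape n (Suc j) = round_tape n j @ 5 # twos (snd (round_blocks n (Suc j)))"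

definition round_prefix_length :: "nat \<Rightarrow> nat \<Rightarrow> nat" where
  "round_prefix_length n j = length (round_tape n j) - Suc (snd (round_blocks n j))"

lemma round_tape_decomp:
  "\<exists>W. round_tape n j = W @ twos (fst (round_blocks n j)) @ 5 # twos (snd (round_blocks n j))
     \<and> (W = [] \<or> last W = 5) \<and> set W \<subseteq> {2, 5}"
proof (induction j)
  case 0
  then show ?case by (auto simp: numeral_2_eq_2)
next
  case (Suc j)
  then obtain W where "round_tape n j = W @ twos (fst (round_blocks n j)) @ 5 # twos (snd (round_blocks n j))"
    "set W \<subseteq> {2, 5}" by blast
  then show ?case by (intro exI[of _ "W @ twos (fst (round_blocks n j)) @ [5]"]) auto
qed

lemma round_prefix_length_bounds:
  "fst (round_blocks n j) \<le> round_prefix_length n j"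
  "round_prefix_length n j + snd (round_blocks n j) \<le> length (round_tape n j)"
  using round_tape_decomp[of n j] by (auto simp: round_prefix_length_def)

lemma length_round_tape_mono: "j \<le> j' \<Longrightarrow> length (round_tape n j) \<le> length (round_tape n j')"
  by (induction j' rule: dec_induct) auto

lemma round_tm_round_tape:
  assumes E: "set E \<subseteq> {1, 2, 3}" "E = [] \<or> last E = 3"
  shows "\<exists>t \<le> 5 * (length E + length (round_tape n (Suc j)) + 3) ^ 3.
    reaches round_tm (0, rev (E @ round_tape n j), []) t (1, rev (E @ round_tape n (Suc j)), [])"
proof -
  let ?a = "fst (round_blocks n j)" and ?b = "snd (round_blocks n j)"
  obtain W where W: "round_tape n j = W @ twos ?a @ 5 # twos ?b" "W = [] \<or> last W = 5"
    using round_tape_decomp by blast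
  define W0 where "W0 = butlast (0 # E @ W)"
  define wl where "wl = last (0 # E @ W)"
  have split: "0 # E @ W = W0 @ [wl]" unfolding W0_def wl_def by simp
  have "wl \<in> {0, 3, 5}" unfolding wl_def using E(2) W(2) by (cases "W = []"; cases "E = []") auto
  then have wl: "wl < 8" "wl \<noteq> 2" "wl \<noteq> 6" by auto
  define L where "L = length W0 + ?a + ?b + 5 + ?a * ?b"
  obtain t where t: "t \<le> (?a + 2) * ((?b + 1) * (3 * L + 5))"
    and run: "reaches round_tm (0, rev (W0 @ wl # twos ?a @ 5 # twos ?b), [0]) t
      (1, rev (W0 @ wl # twos ?a @ 5 # twos ?b @ 5 # twos (2 + ?a * ?b)), [])"
    using round_reaches[OF wl L_def] by blast
  have before: "W0 @ wl # twos ?a @ 5 # twos ?b = 0 # E @ round_tape n j"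
    using split W(1) by (metis append_Cons append_assoc append_eq_Cons_conv self_append_conv2)
  then have after: "W0 @ wl # twos ?a @ 5 # twos ?b @ 5 # twos (2 + ?a * ?b) = 0 # E @ round_tape n (Suc j)"
    by (simp flip: before)
  have "reaches round_tm (0, rev (E @ round_tape n j), []) t (1, rev (E @ round_tape n (Suc j)), [])"
    by (rule reaches_cong_right[OF reaches_cong_left[OF _ run[unfolded before after]]])
      (auto simp: config_eq_def)
  moreover have "(?a + 2) * ((?b + 1) * (3 * L + 5)) \<le> 5 * (length E + length (round_tape n (Suc j)) + 3) ^ 3"
  proof -
    let ?M = "length E + length (round_tape n (Suc j)) + 3"
    have "length W0 = length E + length W" unfolding W0_def by simp
    then have "L = length E + length (round_tape n (Suc j)) + 1" using W(1) unfolding L_def by simp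
    then have "?a + 2 \<le> ?M" "?b + 1 \<le> ?M" "3 * L + 5 \<le> 3 * ?M" by (auto simp: L_def)
    then have "(?a + 2) * ((?b + 1) * (3 * L + 5)) \<le> ?M * (?M * (3 * ?M))"
      by (intro mult_le_mono) auto
    also have "\<dots> \<le> 5 * ?M ^ 3" by (simp add: power3_eq_cube)
    finally show ?thesis .
  qed
  ultimately show ?thesis using t by (intro exI[of _ t]) auto
qed

lemma cleanup_tm_round_tape:
  assumes E: "set E \<subseteq> {1, 2, 3}"
  shows "reaches cleanup_tm (0, rev (E @ round_tape n j), []) (length E + length (round_tape n j) + 2)
           (1, [], E @ twos (round_prefix_length n j) @ 3 # twos (snd (round_blocks n j)))"
proof -
  let ?a = "fst (round_blocks n j)" and ?b = "snd (round_blocks n j)"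
  obtain W where W: "round_tape n j = W @ twos ?a @ 5 # twos ?b" "set W \<subseteq> {2, 5}"
    using round_tape_decomp by blast
  let ?Y = "E @ W @ twos ?a"
  have "map unmark E = E" using E by (induction E) (auto simp: unmark_def)
  moreover have "map unmark W = twos (length W)" using W(2) by (induction W) (auto simp: unmark_def)
  ultimately have "map unmark ?Y = E @ twos (length W + ?a)" by (simp add: unmark_def replicate_add)
  moreover have "set ?Y \<subseteq> {1, 2, 3, 5}" using E W(2) by auto
  ultimately show ?thesis
    using cleanup_tm_reaches[of ?Y ?b] W(1) by (auto simp: round_prefix_length_def elim: reaches_conv)
qed

fun rounds_tm :: "nat \<Rightarrow> tm" where
  "rounds_tm 0 = cleanup_tm"
| "rounds_tm (Suc k) = tm_seq round_tm (rounds_tm k)"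

lemma tm_closed_rounds: "tm_closed (rounds_tm k)"
  by (induction k) (auto intro: tm_closed_seq tm_closed_round tm_closed_cleanup)

lemma rounds_tm_reaches:
  assumes E: "set E \<subseteq> {1, 2, 3}" "E = [] \<or> last E = 3"
  shows "\<exists>t \<le> (k + 1) * (5 * (length E + length (round_tape n (j + k)) + 3) ^ 3).
    reaches (rounds_tm k) (0, rev (E @ round_tape n j), []) t
      (1, [], E @ twos (round_prefix_length n (j + k)) @ 3 # twos (snd (round_blocks n (j + k))))"
proof (induction k arbitrary: j)
  case 0
  let ?M = "length E + length (round_tape n j) + 3"
  have "?M \<le> 5 * ?M ^ 3" by (simp add: power3_eq_cube)
  then show ?case
    using cleanup_tm_round_tape[OF E(1), of n j]
    by (intro exI[of _ "length E + length (round_tape n j) + 2"]) auto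
next
  case (Suc k)
  define X where "X = 5 * (length E + length (round_tape n (j + Suc k)) + 3) ^ 3"
  obtain t1 where t1: "t1 \<le> 5 * (length E + length (round_tape n (Suc j)) + 3) ^ 3"
    and first: "reaches round_tm (0, rev (E @ round_tape n j), []) t1 (1, rev (E @ round_tape n (Suc j)), [])"
    using round_tm_round_tape[OF E] by blast
  obtain t2 where t2: "t2 \<le> (k + 1) * X"
    and rest: "reaches (rounds_tm k) (0, rev (E @ round_tape n (Suc j)), []) t2
      (1, [], E @ twos (round_prefix_length n (j + Suc k)) @ 3 # twos (snd (round_blocks n (j + Suc k))))"
    using Suc.IH[of "Suc j"] unfolding X_def by auto
  have "length (round_tape n (Suc j)) \<le> length (round_tape n (j + Suc k))"
    by (rule length_round_tape_mono) simp
  then have "5 * (length E + length (round_tape n (Suc j)) + 3) ^ 3 \<le> X"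
    unfolding X_def by (intro mult_le_mono2 power_mono) auto
  then have "t1 \<le> X" using t1 by linarith
  then have "t1 + t2 \<le> (Suc k + 1) * X" using t2 by simp
  then show ?case
    using reaches_tm_seq[OF tm_closed_round tm_closed_rounds first rest] unfolding X_def by auto
qed

section \<open>Growth of the rounds\<close>

lemma round_blocks_snd_ge_2: "2 \<le> snd (round_blocks n j)"
  by (induction j) auto

lemma round_blocks_snd_ge: "1 \<le> j \<Longrightarrow> n + 1 \<le> snd (round_blocks n j)"
proof (induction j rule: dec_induct)
  case base
  then show ?case by simp
next
  case (step j)
  then obtain i where "j = Suc i" by (cases j) auto
  then have "1 \<le> fst (round_blocks n j)" using round_blocks_snd_ge_2[of n i] by simp
  then have "snd (round_blocks n j) \<le> fst (round_blocks n j) * snd (round_blocks n j)" by simp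
  moreover have "snd (round_blocks n (Suc j)) = 2 + fst (round_blocks n j) * snd (round_blocks n j)"
    by simp
  ultimately show ?case using step.IH by linarith
qed

lemma round_blocks_lower_bound:
  "(2 * (n + 1)) ^ (j + 1) \<le> fst (round_blocks n (j + 3)) \<and>
   (2 * (n + 1)) ^ (j + 2) \<le> snd (round_blocks n (j + 3))"
proof (induction j)
  case 0
  have "(2 * (n + 1)) ^ (0 + 2) = (2 + 2 * n) * (2 + 2 * n)" by (simp add: power2_eq_square algebra_simps)
  also have "\<dots> \<le> (2 + 2 * n) * (6 + 4 * n)" by (intro mult_le_mono2) simp
  also have "\<dots> \<le> snd (round_blocks n (0 + 3))" by (simp add: numeral_3_eq_3 algebra_simps)
  moreover have "(2 * (n + 1)) ^ (0 + 1) \<le> fst (round_blocks n (0 + 3))" by (simp add: numeral_3_eq_3)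
  ultimately show ?case by simp
next
  case (Suc j)
  let ?y = "2 * (n + 1)"
  have "?y ^ (Suc j + 2) \<le> ?y ^ ((j + 1) + (j + 2))" by (rule power_increasing) auto
  also have "\<dots> = ?y ^ (j + 1) * ?y ^ (j + 2)" by (rule power_add)
  also have "\<dots> \<le> fst (round_blocks n (j + 3)) * snd (round_blocks n (j + 3))"
    using Suc by (intro mult_le_mono) auto
  finally show ?case using Suc by (simp only: add_Suc round_blocks.simps(2) fst_conv snd_conv) simp
qed

lemma round_blocks_upper_bound:
  "fst (round_blocks n j) \<le> (n + 2) ^ 3 ^ (j + 1) \<and> snd (round_blocks n j) \<le> (n + 2) ^ 3 ^ (j + 1)"
proof (induction j)
  case 0
  have "n + 2 \<le> (n + 2) ^ 3" by (simp add: power3_eq_cube)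
  then show ?case by simp
next
  case (Suc j)
  define X where "X = (n + 2) ^ 3 ^ (j + 1)"
  define Y where "Y = (n + 2) ^ 3 ^ (Suc j + 1)"
  have "(n + 2) ^ 1 \<le> X" unfolding X_def by (intro power_increasing) auto
  then have X2: "2 \<le> X" by simp
  have XY: "X \<le> Y" unfolding X_def Y_def by (intro power_increasing) auto
  have ab: "fst (round_blocks n j) \<le> X" "snd (round_blocks n j) \<le> X" using Suc unfolding X_def by auto
  have "2 + fst (round_blocks n j) * snd (round_blocks n j) \<le> 2 + X * X"
    using ab by (intro add_left_mono mult_le_mono)
  also have "\<dots> \<le> X * X * X"
  proof -
    have "2 * (X * X) \<le> X * X * X" using X2 by (simp add: mult.commute)
    moreover have "4 \<le> X * X" using mult_le_mono[OF X2 X2] by simp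
    ultimately show ?thesis by linarith
  qed
  also have "\<dots> = Y" unfolding X_def Y_def by (simp add: power_add[symmetric] power_mult[symmetric])
  finally show ?case using ab XY unfolding Y_def by simp
qed

lemma length_round_tape_le: "length (round_tape n j) \<le> (j + 1) * ((n + 2) ^ 3 ^ (j + 1) + 3)"
proof (induction j)
  case 0
  have "n + 2 \<le> (n + 2) ^ 3" by (simp add: power3_eq_cube)
  then show ?case by simp
next
  case (Suc j)
  define P where "P = (n + 2) ^ 3 ^ (j + 1)"
  define Q where "Q = (n + 2) ^ 3 ^ (Suc j + 1)"
  have "P \<le> Q" unfolding P_def Q_def by (intro power_increasing) auto
  then have "length (round_tape n j) \<le> (j + 1) * (Q + 3)"
    using Suc unfolding P_def[symmetric] by (meson add_le_mono1 le_trans mult_le_mono2)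
  moreover have "snd (round_blocks n (Suc j)) \<le> Q" using round_blocks_upper_bound unfolding Q_def by blast
  ultimately show ?case unfolding Q_def[symmetric] by (simp add: algebra_simps)
qed

lemma poly_nat_mono: "(x :: nat) \<le> y \<Longrightarrow> poly (p :: nat poly) x \<le> poly p y"
  by (induction p rule: pCons_induct) (auto intro: mult_le_mono)

lemma poly_nat_le_coeff_sum:
  assumes "1 \<le> (y :: nat)"
  shows "poly (p :: nat poly) y \<le> (\<Sum>i\<le>degree p. coeff p i) * y ^ degree p"
proof -
  have "poly p y = (\<Sum>i\<le>degree p. coeff p i * y ^ i)" by (rule poly_altdef)
  also have "\<dots> \<le> (\<Sum>i\<le>degree p. coeff p i * y ^ degree p)"
    by (intro sum_mono mult_le_mono2 power_increasing) (use assms in auto)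
  also have "\<dots> = (\<Sum>i\<le>degree p. coeff p i) * y ^ degree p" by (simp add: sum_distrib_right)
  finally show ?thesis .
qed

definition num_rounds :: "nat poly \<Rightarrow> nat" where
  "num_rounds p = (\<Sum>i\<le>degree p. coeff p i) + degree p + 3"

lemma poly_less_round_blocks: "poly p (Suc n) < fst (round_blocks n (num_rounds p))"
proof -
  let ?S = "\<Sum>i\<le>degree p. coeff p i" and ?e = "degree p"
  have "poly p (Suc n) \<le> ?S * Suc n ^ ?e" by (rule poly_nat_le_coeff_sum) simp
  also have "\<dots> < 2 ^ (?S + ?e + 1) * Suc n ^ ?e"
  proof -
    have "?S < 2 ^ ?S" by (rule less_exp)
    also have "\<dots> \<le> 2 ^ (?S + ?e + 1)" by (intro power_increasing) auto
    finally show ?thesis by simp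
  qed
  also have "\<dots> \<le> 2 ^ (?S + ?e + 1) * Suc n ^ (?S + ?e + 1)"
    by (intro mult_le_mono2 power_increasing) auto
  also have "\<dots> = (2 * (n + 1)) ^ (?S + ?e + 1)" by (subst power_mult_distrib) simp
  also have "\<dots> \<le> fst (round_blocks n (?S + ?e + 3))" using round_blocks_lower_bound by blast
  finally show ?thesis by (simp add: num_rounds_def)
qed

declare bin.simps [simp del]

lemma set_bin: "set (bin n) \<subseteq> {1, 2}"
proof (induction n rule: bin.induct)
  case (1 n)
  have "n mod 2 + 1 \<in> {1, 2}" by (cases "even n") auto
  moreover have "n < 2 \<Longrightarrow> n + 1 \<in> {1, 2}" by auto
  ultimately show ?case using 1 by (subst bin.simps) auto
qed

lemma set_enc_nats: "set (enc_nats m) \<subseteq> {1, 2, 3}"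
  unfolding enc_nats_def using set_bin by (induction m) auto

lemma length_enc_nats: "length (enc_nats m) = sum_list (map blen m) + length m"
  unfolding enc_nats_def blen_def by (induction m) auto

lemma last_enc_nats: "enc_nats m = [] \<or> last (enc_nats m) = 3"
  unfolding enc_nats_def by (induction m rule: rev_induct) auto

lemma unary_eq_twos: "unary n = twos n"
  by (simp add: unary_def)

lemma supdist_le:
  "(\<And>i. i < k \<Longrightarrow> \<bar>xs ! i - ys ! i\<bar> \<le> B) \<Longrightarrow> 0 \<le> B \<Longrightarrow> supdist k xs ys \<le> B"
  unfolding supdist_def by (subst Max_le_iff) auto

lemma supdist_ge: "i < k \<Longrightarrow> \<bar>xs ! i - ys ! i\<bar> \<le> supdist k xs ys"
  unfolding supdist_def by (rule Max_ge) auto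

lemma supdist_nonneg: "0 \<le> supdist k xs ys"
  unfolding supdist_def by (rule Max_ge) auto

lemma supdist_self [simp]: "supdist k xs xs = 0"
  using supdist_le[of k xs xs 0] supdist_nonneg[of k xs xs] by simp

lemma supdist_triangle: "supdist k xs zs \<le> supdist k xs ys + supdist k ys zs"
proof (rule supdist_le)
  fix i assume "i < k"
  then have "\<bar>xs ! i - ys ! i\<bar> \<le> supdist k xs ys" "\<bar>ys ! i - zs ! i\<bar> \<le> supdist k ys zs"
    by (auto intro: supdist_ge)
  then show "\<bar>xs ! i - zs ! i\<bar> \<le> supdist k xs ys + supdist k ys zs" by linarith
qed (auto intro: add_nonneg_nonneg supdist_nonneg)

lemma approx_output_trans:
  assumes "approx_output k y v K" "n + 1 \<le> K" "supdist k v w \<le> (1/2) ^ (n + 1)"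
  shows "approx_output k y w n"
proof -
  obtain qs where qs: "length qs = k" "y = enc_dyadics qs"
    and close: "supdist k (map dyval qs) v \<le> (1/2) ^ K"
    using assms(1) unfolding approx_output_def by blast
  have "(1/2) ^ K \<le> ((1/2) ^ (n + 1) :: real)" using assms(2) by (intro power_decreasing) auto
  then have "supdist k (map dyval qs) w \<le> (1/2) ^ (n + 1) + (1/2) ^ (n + 1)"
    using supdist_triangle[of k "map dyval qs" w v] close assms(3) by linarith
  then show ?thesis using qs unfolding approx_output_def by auto
qed

definition dyadic_rat :: "int \<times> nat \<Rightarrow> rat" where
  "dyadic_rat q = of_int (fst q) / 2 ^ snd q"

lemma of_rat_dyadic_rat: "real_of_rat (dyadic_rat q) = dyval q"
  by (simp add: dyadic_rat_def dyval_def of_rat_divide of_rat_power)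

lemma tm_outputs_within_mono:
  "tm_outputs_within M xs t y \<Longrightarrow> t \<le> T \<Longrightarrow> tm_outputs_within M xs T y"
  unfolding tm_outputs_within_def using order_trans by blast

lemma tm_outputs_within_seq:
  assumes M1: "tm_closed M1" and M2: "tm_wf M2" and xs': "\<forall>x\<in>set xs'. x < 5"
    and pre: "reaches M1 (0, [], xs) t (1, [], xs')"
    and out: "tm_outputs_within M2 xs' T y"
  shows "tm_outputs_within (tm_seq M1 (tm_total M2)) xs (t + T) y"
proof -
  obtain s c where s: "s \<le> T" and run: "reaches (tm_total M2) (0, [], xs') s c"
    and c: "fst c = 1" "takeWhile (\<lambda>a. a \<noteq> 0) (snd (snd c)) = y"
    using tm_outputs_within_reaches_total[OF M2 xs' out] by blast
  have "reaches (tm_total M2) (0, [], xs') s (1, fst (snd c), snd (snd c))"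
    using run c(1) by (metis prod.collapse)
  then have "reaches (tm_seq M1 (tm_total M2)) (0, [], xs) (t + s) (1, fst (snd c), snd (snd c))"
    by (rule reaches_tm_seq[OF M1 tm_closed_total[OF M2] pre])
  then show ?thesis
    using tm_outputs_within_if_reaches[of _ xs "t + s" "(1, snd c)" "t + T"] s c(2) by simp
qed

lemma ptime_unary_outputs:
  assumes wf: "tm_wf M"
    and out: "\<And>m n. length m = d \<Longrightarrow> length (qs m n) = d' \<and>
      tm_outputs_within M (enc_nats m @ twos n) (poly P (sum_list (map blen m) + n)) (enc_dyadics (qs m n))"
  shows "ptime_unary d d' (\<lambda>m n. map dyadic_rat (qs m n))"
  unfolding ptime_unary_def
proof (rule exI[of _ "tm_seq drop_suffix_tm (tm_total M)"], rule exI[of _ "P + [:2 * d + 4, 2:]"],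
    intro conjI allI impI)
  show "tm_wf (tm_seq drop_suffix_tm (tm_total M))"
    by (intro tm_closed_imp_wf tm_closed_seq tm_closed_drop_suffix tm_closed_total wf)
  fix m :: "nat list" and n k :: nat assume len: "length m = d"
  let ?E = "enc_nats m" and ?s = "sum_list (map blen m)"
  have "tm_outputs_within (tm_seq drop_suffix_tm (tm_total M)) (?E @ twos n @ [3] @ twos k)
      (2 * length ?E + 2 * n + 2 * k + 4 + poly P (?s + n)) (enc_dyadics (qs m n))"
    using set_enc_nats[of m]
    by (intro tm_outputs_within_seq[OF tm_closed_drop_suffix wf _ drop_suffix_tm_reaches])
      (use out[OF len] in auto)
  moreover have "poly P (?s + n) \<le> poly P (?s + n + k)" by (rule poly_nat_mono) simp
  then have "2 * length ?E + 2 * n + 2 * k + 4 + poly P (?s + n) \<le> poly (P + [:2 * d + 4, 2:]) (?s + n + k)"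
    using len by (simp add: length_enc_nats algebra_simps)
  moreover have "approx_output d' (enc_dyadics (qs m n)) (map of_rat (map dyadic_rat (qs m n))) k"
    unfolding approx_output_def using out[OF len, of n]
    by (intro exI[of _ "qs m n"]) (simp add: comp_def of_rat_dyadic_rat)
  ultimately show "\<exists>y. tm_outputs_within (tm_seq drop_suffix_tm (tm_total M))
      (enc_nats m @ unary n @ [3] @ unary k) (poly (P + [:2 * d + 4, 2:]) (?s + n + k)) y
      \<and> approx_output d' y (map of_rat (map dyadic_rat (qs m n))) k"
    unfolding unary_eq_twos by (blast intro: tm_outputs_within_mono)
qed

lemma ptime_real_imp_rational_approx:
  assumes "ptime_real d d' F"
  shows "\<exists>(f :: nat list \<Rightarrow> nat \<Rightarrow> rat list) (g :: nat list \<Rightarrow> nat \<Rightarrow> rat) (p :: nat poly).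
        (\<forall>m n. length m = d \<longrightarrow> length (f m n) = d') \<and>
        ptime_unary d d' f \<and>
        (\<forall>m n. length m = d \<longrightarrow> supdist d' (map of_rat (f m n)) (F m) \<le> of_rat (g m n)) \<and>
        (\<forall>m n. length m = d \<longrightarrow> 0 \<le> g m n) \<and>
        (\<forall>m. length m = d \<longrightarrow> (\<lambda>n. real_of_rat (g m n)) \<longlonglongrightarrow> 0) \<and>
        (\<forall>m n i. length m = d \<longrightarrow> poly p n < i \<longrightarrow> real_of_rat \<bar>g m i\<bar> \<le> (1/2) ^ n)"
proof -
  obtain M P where wf: "tm_wf M" and comp: "\<And>m n. length m = d \<Longrightarrow>
      \<exists>y. tm_outputs_within M (enc_nats m @ twos n) (poly P (sum_list (map blen m) + n)) y
        \<and> approx_output d' y (F m) n"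
    using assms unfolding ptime_real_def unary_eq_twos by blast
  define out where "out m n = (SOME qs. length qs = d' \<and>
      tm_outputs_within M (enc_nats m @ twos n) (poly P (sum_list (map blen m) + n)) (enc_dyadics qs)
      \<and> supdist d' (map dyval qs) (F m) \<le> (1/2) ^ n)" for m n
  have out: "length (out m n) = d' \<and>
      tm_outputs_within M (enc_nats m @ twos n) (poly P (sum_list (map blen m) + n)) (enc_dyadics (out m n))
      \<and> supdist d' (map dyval (out m n)) (F m) \<le> (1/2) ^ n" if "length m = d" for m n
    unfolding out_def by (rule someI_ex) (use comp[OF that, of n] in \<open>auto simp: approx_output_def\<close>)
  define f where "f m n = map dyadic_rat (out m n)" for m n
  define g :: "nat list \<Rightarrow> nat \<Rightarrow> rat" where "g m n = (1/2) ^ n" for m n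
  have g_val: "real_of_rat (g m n) = (1/2) ^ n" for m n
    by (simp add: g_def of_rat_power of_rat_divide)
  have "ptime_unary d d' f"
    unfolding f_def[abs_def] using ptime_unary_outputs[OF wf] out by blast
  moreover have "real_of_rat \<bar>g m i\<bar> \<le> (1/2) ^ n" if "poly [:0, 1:] n < i" for m n i
  proof -
    have "real_of_rat \<bar>g m i\<bar> = (1/2) ^ i" by (simp add: g_def of_rat_power of_rat_divide)
    also have "\<dots> \<le> (1/2) ^ n" using that by (intro power_decreasing) auto
    finally show ?thesis .
  qed
  moreover have "supdist d' (map of_rat (f m n)) (F m) \<le> of_rat (g m n)" if "length m = d" for m n
    using out[OF that] by (simp add: f_def g_val comp_def of_rat_dyadic_rat)
  moreover have "(\<lambda>n. real_of_rat (g m n)) \<longlonglongrightarrow> 0" for m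
    unfolding g_val by (intro LIMSEQ_realpow_zero) auto
  moreover have "length (f m n) = d'" if "length m = d" for m n
    using out[OF that] by (simp add: f_def)
  moreover have "0 \<le> g m n" for m n
    by (simp add: g_def)
  ultimately show ?thesis
    by (intro exI[of _ f] exI[of _ g] exI[of _ "[:0, 1:]"]) blast
qed

lemma unary_precision_tm_exists:
  fixes p :: "nat poly"
  shows "\<exists>M (Q :: nat poly). tm_closed M \<and>
    (\<forall>(E :: nat list) n. set E \<subseteq> {1, 2, 3} \<longrightarrow> (E = [] \<or> last E = 3) \<longrightarrow>
      (\<exists>t N K. reaches M (0, [], E @ twos n) t (1, [], E @ twos N @ 3 # twos K) \<and>
         t + N + K \<le> poly Q (length E + n) \<and> poly p (n + 1) < N \<and> n + 1 \<le> K))"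
proof -
  define r where "r = num_rounds p"
  define G where "G = smult (r + 1) ([:2, 1:] ^ 3 ^ (r + 1) + [:3:])"
  define Q where "Q = [:3, 1:] + smult (5 * (r + 1)) (([:3, 1:] + G) ^ 3) + G"
  show ?thesis
  proof (rule exI[of _ "tm_seq init_tm (rounds_tm r)"], rule exI[of _ Q], intro conjI allI impI)
    show "tm_closed (tm_seq init_tm (rounds_tm r))"
      by (intro tm_closed_seq tm_closed_init tm_closed_rounds)
    fix E :: "nat list" and n :: nat assume E: "set E \<subseteq> {1, 2, 3}" "E = [] \<or> last E = 3"
    let ?x = "length E + n" and ?N = "round_prefix_length n r" and ?K = "snd (round_blocks n r)"
    have init: "reaches init_tm (0, [], E @ twos n) (length E + n + 3) (1, rev (E @ round_tape n 0), [])"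
      using init_tm_reaches[of "E @ twos n"] E by simp
    obtain t where t: "t \<le> (r + 1) * (5 * (length E + length (round_tape n r) + 3) ^ 3)"
      and rounds: "reaches (rounds_tm r) (0, rev (E @ round_tape n 0), []) t
        (1, [], E @ twos ?N @ 3 # twos ?K)"
      using rounds_tm_reaches[OF E, of r n 0] by auto
    have tape: "length (round_tape n r) \<le> poly G ?x"
    proof -
      have "length (round_tape n r) \<le> (r + 1) * ((n + 2) ^ 3 ^ (r + 1) + 3)"
        by (rule length_round_tape_le)
      also have "\<dots> \<le> (r + 1) * ((?x + 2) ^ 3 ^ (r + 1) + 3)"
        by (intro mult_le_mono2 add_right_mono power_mono) auto
      also have "\<dots> = poly G ?x" by (simp add: G_def algebra_simps)
      finally show ?thesis .
    qed
    have "length E + length (round_tape n r) + 3 \<le> poly ([:3, 1:] + G) ?x" using tape by simp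
    then have "t \<le> (r + 1) * (5 * poly ([:3, 1:] + G) ?x ^ 3)"
      using t by (meson le_trans mult_le_mono2 power_mono zero_le)
    moreover have "?N + ?K \<le> poly G ?x" using round_prefix_length_bounds(2)[of n r] tape by simp
    ultimately have "length E + n + 3 + t + ?N + ?K \<le> poly Q ?x" by (simp add: Q_def algebra_simps)
    moreover have "poly p (n + 1) < ?N"
      using poly_less_round_blocks[of p n] round_prefix_length_bounds(1)[of n r] by (simp add: r_def)
    moreover have "n + 1 \<le> ?K" by (rule round_blocks_snd_ge) (simp add: r_def num_rounds_def)
    ultimately show "\<exists>t N K. reaches (tm_seq init_tm (rounds_tm r)) (0, [], E @ twos n) t
        (1, [], E @ twos N @ 3 # twos K) \<and> t + N + K \<le> poly Q ?x \<and> poly p (n + 1) < N \<and> n + 1 \<le> K"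
      using reaches_tm_seq[OF tm_closed_init tm_closed_rounds init rounds] by (intro exI) auto
  qed
qed

lemma rational_approx_imp_ptime_real:
  fixes f :: "nat list \<Rightarrow> nat \<Rightarrow> rat list" and g :: "nat list \<Rightarrow> nat \<Rightarrow> rat" and p :: "nat poly"
  assumes f: "ptime_unary d d' f"
    and approx: "\<forall>m n. length m = d \<longrightarrow> supdist d' (map of_rat (f m n)) (F m) \<le> of_rat (g m n)"
    and modulus: "\<forall>m n i. length m = d \<longrightarrow> poly p n < i \<longrightarrow> real_of_rat \<bar>g m i\<bar> \<le> (1/2) ^ n"
  shows "ptime_real d d' F"
proof -
  obtain Mf Pf where wf: "tm_wf Mf" and comp: "\<And>m n k. length m = d \<Longrightarrow>
      \<exists>y. tm_outputs_within Mf (enc_nats m @ twos n @ [3] @ twos k) (poly Pf (sum_list (map blen m) + n + k)) y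
        \<and> approx_output d' y (map of_rat (f m n)) k"
    using f unfolding ptime_unary_def unary_eq_twos by blast
  obtain M0 Q0 where M0: "tm_closed M0"
    and pre: "\<And>(E :: nat list) n. set E \<subseteq> {1, 2, 3} \<Longrightarrow> E = [] \<or> last E = 3 \<Longrightarrow>
      \<exists>t N K. reaches M0 (0, [], E @ twos n) t (1, [], E @ twos N @ 3 # twos K) \<and>
        t + N + K \<le> poly Q0 (length E + n) \<and> poly p (n + 1) < N \<and> n + 1 \<le> K"
    using unary_precision_tm_exists[of p] by blast
  define Q where "Q = pcompose (Q0 + pcompose Pf ([:0, 1:] + Q0)) [:d, 1:]"
  show ?thesis
    unfolding ptime_real_def
  proof (rule exI[of _ "tm_seq M0 (tm_total Mf)"], rule exI[of _ Q], intro conjI allI impI)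
    show "tm_wf (tm_seq M0 (tm_total Mf))" by (intro tm_closed_imp_wf tm_closed_seq M0 tm_closed_total wf)
    fix m :: "nat list" and n :: nat assume len: "length m = d"
    let ?E = "enc_nats m" and ?s = "sum_list (map blen m)"
    have x: "length ?E + n = ?s + n + d" using len by (simp add: length_enc_nats)
    obtain t N K where run: "reaches M0 (0, [], ?E @ twos n) t (1, [], ?E @ twos N @ 3 # twos K)"
      and time: "t + N + K \<le> poly Q0 (?s + n + d)" and N: "poly p (n + 1) < N" and K: "n + 1 \<le> K"
      using pre[OF set_enc_nats[of m] last_enc_nats[of m], of n] unfolding x by blast
    obtain y where out: "tm_outputs_within Mf (?E @ twos N @ [3] @ twos K) (poly Pf (?s + N + K)) y"
      and y: "approx_output d' y (map of_rat (f m N)) K"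
      using comp[OF len] by blast
    have "tm_outputs_within (tm_seq M0 (tm_total Mf)) (?E @ twos n) (t + poly Pf (?s + N + K)) y"
      using set_enc_nats[of m] by (intro tm_outputs_within_seq[OF M0 wf _ run]) (use out in auto)
    moreover have "t + poly Pf (?s + N + K) \<le> poly Q (?s + n)"
    proof -
      have "poly Pf (?s + N + K) \<le> poly Pf (?s + n + d + poly Q0 (?s + n + d))"
        using time by (intro poly_nat_mono) simp
      then show ?thesis using time by (simp add: Q_def poly_pcompose algebra_simps)
    qed
    moreover have "supdist d' (map of_rat (f m N)) (F m) \<le> (1/2) ^ (n + 1)"
    proof -
      have "supdist d' (map of_rat (f m N)) (F m) \<le> of_rat (g m N)" using approx len by blast
      also have "\<dots> \<le> real_of_rat \<bar>g m N\<bar>" by (simp add: of_rat_less_eq)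
      also have "\<dots> \<le> (1/2) ^ (n + 1)" using modulus len N by blast
      finally show ?thesis .
    qed
    then have "approx_output d' y (F m) n" by (rule approx_output_trans[OF y K])
    ultimately show "\<exists>y. tm_outputs_within (tm_seq M0 (tm_total Mf)) (enc_nats m @ unary n)
        (poly Q (?s + n)) y \<and> approx_output d' y (F m) n"
      unfolding unary_eq_twos by (blast intro: tm_outputs_within_mono)
  qed
qed

theorem mainTheorem12:
  fixes d d' :: nat and F :: "nat list \<Rightarrow> real list"
  assumes "\<forall>m. length m = d \<longrightarrow> length (F m) = d'"
  shows "ptime_real d d' F \<longleftrightarrow>
    (\<exists>(f :: nat list \<Rightarrow> nat \<Rightarrow> rat list) (g :: nat list \<Rightarrow> nat \<Rightarrow> rat) (p :: nat poly).
        (\<forall>m n. length m = d \<longrightarrow> length (f m n) = d') \<and>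
        ptime_unary d d' f \<and>
        (\<forall>m n. length m = d \<longrightarrow> supdist d' (map of_rat (f m n)) (F m) \<le> of_rat (g m n)) \<and>
        (\<forall>m n. length m = d \<longrightarrow> 0 \<le> g m n) \<and>
        (\<forall>m. length m = d \<longrightarrow> (\<lambda>n. real_of_rat (g m n)) \<longlonglongrightarrow> 0) \<and>
        (\<forall>m n i. length m = d \<longrightarrow> poly p n < i \<longrightarrow> real_of_rat \<bar>g m i\<bar> \<le> (1/2) ^ n))"
  by (rule iffI, erule ptime_real_imp_rational_approx, elim exE conjE,
      erule rational_approx_imp_ptime_real; assumption)

end
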